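(* Let $\rho$ be an admissible function on an RD-space $(\mathcal X,d,\mu)$. There exist a nonnegative function $K_\rho$ on $\mathcal X\times\mathcal X$ and a constant $C>0$ such that: (i) $K_\rho(x,y)=0$ if $d(x,y)>C\min\{\rho(x),\rho(y)\}$, and $K_\rho(x,y)\le C\frac{1}{V_{\rho(x)}(x)+V_{\rho(y)}(y)}$ for all $x,y$; (ii) $K_\rho(x,y)=K_\rho(y,x)$ for all $x,y$; (iii) $|K_\rho(x,y)-K_\rho(x,y')|\le C\frac{d(y,y')}{\rho(x)}\frac{1}{V_{\rho(x)}(x)+V_{\rho(y)}(y)}$ for all $x,y,y'$ with $d(y,y')\le[\rho(x)+d(x,y)]/2$; (iv) $|[K_\rho(x,y)-K_\rho(x,y')]-[K_\rho(x',y)-K_\rho(x',y')]|\le C\frac{d(x,x')}{\rho(x)}\frac{d(y,y')}{\rho(x)}\frac{1}{V_{\rho(x)}(x)+V_{\rho(y)}(y)}$ for all $x,x',y,y'$ with $d(x,x')\le[\rho(y)+d(x,y)]/3$ and $d(y,y')\le[\rho(x)+d(x,y)]/3$; (v) $\int_{\mathcal X}K_\rho(x,y)\,d\mu(x)=1$ for all $y\in\mathcal X$.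
   Context: An RD-space is a triple $(\mathcal X,d,\mu)$ where $(\mathcal X,d)$ is a metric space and $\mu$ a regular Borel measure such that every ball $B(x,r)=\{y:d(x,y)<r\}$ has finite positive measure, $\mu$ is doubling, and there exist constants $0<\kappa\le n$, $C_2\ge1$ with $C_2^{-1}\lambda^\kappa\mu(B(x,r))\le\mu(B(x,\lambda r))\le C_2\lambda^n\mu(B(x,r))$ for all $x$, $0<r<\operatorname{diam}(\mathcal X)/2$, $1\le\lambda<\operatorname{diam}(\mathcal X)/(2r)$; $\mu(\mathcal X)=\infty$. $V_r(x)=\mu(B(x,r))$. A positive function $\rho$ on $\mathcal X$ is admissible if there exist constants $C_3,k_0>0$ such that for all $x,y$, $\rho(y)\le C_3[\rho(x)]^{1/(1+k_0)}[\rho(x)+d(x,y)]^{k_0/(1+k_0)}$. *)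

theory Defs
  imports "HOL-Analysis.Analysis"
begin

text \<open>The underlying metric space is the whole type 'a (class metric_space);
  the diameter may be infinite, so it is taken in the extended reals.\<close>
definition space_diam :: "'a::metric_space itself \<Rightarrow> ereal" where
  "space_diam _ = (SUP p \<in> (UNIV :: ('a \<times> 'a) set). ereal (dist (fst p) (snd p)))"

definition regular_borel :: "'a::metric_space measure \<Rightarrow> bool" where
  "regular_borel \<mu> \<longleftrightarrow> sets \<mu> = sets borel \<and>
     (\<forall>A \<in> sets borel.
        emeasure \<mu> A = (INF U \<in> {U. open U \<and> A \<subseteq> U}. emeasure \<mu> U) \<and>
        emeasure \<mu> A = (SUP K \<in> {K. compact K \<and> K \<subseteq> A}. emeasure \<mu> K))"

definition doubling :: "'a::metric_space measure \<Rightarrow> bool" where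
  "doubling \<mu> \<longleftrightarrow> (\<exists>C. \<forall>x r. r > 0 \<longrightarrow>
      emeasure \<mu> (ball x (2*r)) \<le> ennreal C * emeasure \<mu> (ball x r))"

definition RD_space :: "'a::metric_space measure \<Rightarrow> bool" where
  "RD_space \<mu> \<longleftrightarrow> regular_borel \<mu> \<and>
     (\<forall>x r. r > 0 \<longrightarrow> 0 < emeasure \<mu> (ball x r) \<and> emeasure \<mu> (ball x r) < \<infinity>) \<and>
     doubling \<mu> \<and>
     (\<exists>\<kappa> n C2. 0 < \<kappa> \<and> \<kappa> \<le> n \<and> C2 \<ge> 1 \<and>
        (\<forall>x r lam. 0 < r \<and> ereal r < space_diam TYPE('a) / 2 \<and> 1 \<le> lam \<and>
            ereal lam < space_diam TYPE('a) / ereal (2*r) \<longrightarrow>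
           (1/C2) * lam powr \<kappa> * measure \<mu> (ball x r) \<le> measure \<mu> (ball x (lam*r)) \<and>
           measure \<mu> (ball x (lam*r)) \<le> C2 * lam powr n * measure \<mu> (ball x r))) \<and>
     emeasure \<mu> (space \<mu>) = \<infinity>"

definition V :: "'a::metric_space measure \<Rightarrow> real \<Rightarrow> 'a \<Rightarrow> real" where
  "V \<mu> r x = measure \<mu> (ball x r)"

definition admissible :: "('a::metric_space \<Rightarrow> real) \<Rightarrow> bool" where
  "admissible \<rho> \<longleftrightarrow> (\<forall>x. 0 < \<rho> x) \<and>
     (\<exists>C3 k0. 0 < C3 \<and> 0 < k0 \<and> (\<forall>x y.
        \<rho> y \<le> C3 * (\<rho> x) powr (1/(1+k0)) * (\<rho> x + dist x y) powr (k0/(1+k0))))"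

end

theory Submission
  imports Defs
begin

(* Idea. rho is replaced by its 1-Lipschitz regularisation r z = inf_w (rho w + d(z,w)),
   which satisfies r <= rho <= C3 r.  Admissibility makes r comparable at any two points
   whose distance is a bounded multiple of r, and then the doubling property makes the
   volumes W z = mu(B(z, r z)) comparable there as well.  With the Lipschitz cut-off
   a x z = phi(d(x,z) / r z) we form the normalised bumps psi x z = a x z / S x,
   S x = integral of a x, the density m z = integral of psi(., z), which is bounded
   below, and the kernel
       K x y = integral over z of psi x z * psi y z / m z.
   Non-negativity and symmetry are immediate, the normalisation (v) is Fubini, and the
   support and size bounds follow from the supports of the bumps.  The regularity bounds
   (iii) and (iv) come from Lipschitz estimates for psi at scale r; increments larger than
   the scale are handled by splitting the difference into single kernel values and using
   the size bound.  All estimates are first proved in terms of r and W (recorded with the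
   predicate ctrl) and translated into rho and V at the very end. *)

(* If X <= c * Y^a * X^(1-a) with 0 < a < 1, the power of X can be absorbed:
   X <= c^(1/a) * Y.  This turns the admissibility inequality into linear comparisons. *)
lemma powr_absorb:
  fixes X Y c a :: real
  assumes X: "X > 0" and Y: "Y > 0" and c: "c > 0" and a: "0 < a" "a < 1"
    and h: "X \<le> c * Y powr a * X powr (1 - a)"
  shows "X \<le> c powr (1/a) * Y"
proof -
  have "X powr a * X powr (1 - a) = X" using X by (simp add: powr_add[symmetric])
  with h have "X powr a * X powr (1 - a) \<le> (c * Y powr a) * X powr (1 - a)" by simp
  then have "X powr a \<le> c * Y powr a" using X by (simp add: mult_le_cancel_right)
  then have "(X powr a) powr (1/a) \<le> (c * Y powr a) powr (1/a)"
    using a X by (intro powr_mono2) auto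
  also have "(X powr a) powr (1/a) = X" using a X by (simp add: powr_powr)
  also have "(c * Y powr a) powr (1/a) = c powr (1/a) * Y"
    using a c Y by (simp add: powr_mult powr_powr)
  finally show ?thesis .
qed

lemma le_mult_ge1: "1 \<le> c \<Longrightarrow> 0 \<le> x \<Longrightarrow> x \<le> c * (x::real)"
  using mult_right_mono[of 1 c x] by simp

lemma one_le_mult: "1 \<le> c \<Longrightarrow> 1 \<le> d \<Longrightarrow> 1 \<le> c * (d::real)"
  using mult_mono[of 1 c 1 d] by simp

lemma le_max0_mult: "0 \<le> x \<Longrightarrow> d \<le> M * x \<Longrightarrow> d \<le> max M 0 * (x::real)"
  using mult_right_mono[OF max.cobounded1[of M 0], of x] by linarith

lemma divide_le_divide_cross: "0 < p \<Longrightarrow> 0 < (q::real) \<Longrightarrow> X * p \<le> Y * q \<Longrightarrow> X / q \<le> Y / p"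
  by (simp add: field_simps)

lemma integral_dominated:
  fixes f g :: "'b \<Rightarrow> real"
  assumes f: "f \<in> borel_measurable M" and g: "integrable M g" and b: "\<And>z. \<bar>f z\<bar> \<le> g z"
  shows "integrable M f" "\<bar>integral\<^sup>L M f\<bar> \<le> integral\<^sup>L M g"
proof -
  have gn: "0 \<le> g z" for z using b[of z] by linarith
  show fi: "integrable M f"
    by (rule Bochner_Integration.integrable_bound[OF g f]) (use b gn in auto)
  have "\<bar>integral\<^sup>L M f\<bar> = norm (integral\<^sup>L M f)" by simp
  also have "\<dots> \<le> (\<integral>x. norm (f x) \<partial>M)" by (rule integral_norm_bound)
  also have "\<dots> \<le> integral\<^sup>L M g"
    by (rule integral_mono'[OF g]) (use b gn in auto)
  finally show "\<bar>integral\<^sup>L M f\<bar> \<le> integral\<^sup>L M g" .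
qed

lemma integral_nonzero_witness:
  fixes f :: "'b \<Rightarrow> real"
  assumes "integral\<^sup>L M f \<noteq> 0"
  shows "\<exists>z. f z \<noteq> 0"
proof (rule ccontr)
  assume "\<not> ?thesis"
  then have "f = (\<lambda>_. 0)" by auto
  then show False using assms by simp
qed

definition phi :: "real \<Rightarrow> real" where "phi t = max 0 (min 1 (2 - 2*t))"

lemma phi_bounds: "0 \<le> phi t" "phi t \<le> 1"
  unfolding phi_def by auto

lemma phi_one: "t \<le> 1/2 \<Longrightarrow> phi t = 1"
  unfolding phi_def by auto

lemma phi_zero: "1 \<le> t \<Longrightarrow> phi t = 0"
  unfolding phi_def by auto

lemma phi_nz: "phi t \<noteq> 0 \<Longrightarrow> t < 1"
  using phi_zero[of t] by linarith

lemma phi_lip: "\<bar>phi s - phi t\<bar> \<le> 2 * \<bar>s - t\<bar>"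
  unfolding phi_def by (auto simp: max_def min_def split: abs_split)

definition separated :: "real \<Rightarrow> 'a::metric_space set \<Rightarrow> bool" where
  "separated \<delta> F \<longleftrightarrow> (\<forall>p\<in>F. \<forall>q\<in>F. p \<noteq> q \<longrightarrow> \<delta> \<le> dist p q)"

lemma separated_insert:
  assumes "separated \<delta> F" and "\<forall>q\<in>F. \<delta> \<le> dist y q"
  shows "separated \<delta> (insert y F)"
  using assms unfolding separated_def by (auto simp: dist_commute)

lemma separated_disjoint_balls:
  assumes "separated \<delta> F"
  shows "disjoint_family_on (\<lambda>q. ball q (\<delta>/2)) F"
  unfolding disjoint_family_on_def
proof (intro ballI impI)
  fix p q assume pq: "p \<in> F" "q \<in> F" "p \<noteq> q"
  show "ball p (\<delta>/2) \<inter> ball q (\<delta>/2) = {}"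
  proof (rule ccontr)
    assume "ball p (\<delta>/2) \<inter> ball q (\<delta>/2) \<noteq> {}"
    then obtain z where "dist p z < \<delta>/2" "dist q z < \<delta>/2" by auto
    then have "dist p q < \<delta>" using dist_triangle[of p q z] by (simp add: dist_commute)
    then show False using assms pq unfolding separated_def by force
  qed
qed

(* This is all of the RD-space structure the construction uses. *)
locale doubling_mm_space =
  fixes \<mu> :: "'a::metric_space measure"
  assumes sets_mu[simp, measurable_cong]: "sets \<mu> = sets borel"
    and ball_pos: "r > 0 \<Longrightarrow> 0 < emeasure \<mu> (ball x r)"
    and ball_finite: "r > 0 \<Longrightarrow> emeasure \<mu> (ball x r) < \<infinity>"
    and doubling: "doubling \<mu>"
begin

abbreviation vol :: "'a \<Rightarrow> real \<Rightarrow> real" where "vol x t \<equiv> measure \<mu> (ball x t)"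

lemma space_mu[simp]: "space \<mu> = UNIV"
  using sets_eq_imp_space_eq[OF sets_mu] by simp

lemma ball_fin: "emeasure \<mu> (ball x r) < \<infinity>"
proof (cases "r > 0")
  case False then have "ball x r = {}" by auto
  then have "emeasure \<mu> (ball x r) = 0" by (metis emeasure_empty)
  then show ?thesis by simp
qed (rule ball_finite)

lemma ball_fin_top[simp]: "emeasure \<mu> (ball x r) = top \<longleftrightarrow> False"
  using ball_fin[of x r] by auto

lemma emeasure_ball: "emeasure \<mu> (ball x r) = ennreal (vol x r)"
  by (simp add: emeasure_eq_ennreal_measure less_top)

lemma vol_pos: "r > 0 \<Longrightarrow> 0 < vol x r"
  using ball_pos[of r x] emeasure_ball[of x r] by simp

lemma ball_fmeas[simp,intro]: "ball x r \<in> fmeasurable \<mu>"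
  using ball_fin by (auto intro: fmeasurableI)

lemma vol_mono: "s \<le> t \<Longrightarrow> vol x s \<le> vol x t"
  by (rule measure_mono_fmeasurable) auto

lemma vol_mono_set: "ball x s \<subseteq> ball y t \<Longrightarrow> vol x s \<le> vol y t"
  by (rule measure_mono_fmeasurable) auto

lemma doubling_const_ex: "\<exists>D\<ge>1. \<forall>x r. r > 0 \<longrightarrow> vol x (2*r) \<le> D * vol x r"
proof -
  obtain C where C: "\<And>x r. r > 0 \<Longrightarrow> emeasure \<mu> (ball x (2*r)) \<le> ennreal C * emeasure \<mu> (ball x r)"
    using doubling unfolding doubling_def by blast
  define D where "D = max C 1"
  have "vol x (2*r) \<le> D * vol x r" if "r > 0" for x r
  proof -
    have "ennreal (vol x (2*r)) \<le> ennreal C * ennreal (vol x r)"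
      using C[OF that, of x] by (simp add: emeasure_ball)
    also have "\<dots> \<le> ennreal D * ennreal (vol x r)"
      by (intro mult_right_mono ennreal_leI) (auto simp: D_def)
    also have "\<dots> = ennreal (D * vol x r)"
      by (simp add: D_def ennreal_mult)
    finally show ?thesis
      by (subst (asm) ennreal_le_iff) (auto simp: D_def)
  qed
  then show ?thesis unfolding D_def by (intro exI[of _ "max C 1"]) auto
qed

definition cdbl where "cdbl = (SOME D. D \<ge> 1 \<and> (\<forall>x r. r > 0 \<longrightarrow> vol x (2*r) \<le> D * vol x r))"

lemma cdbl: "cdbl \<ge> 1" "r > 0 \<Longrightarrow> vol x (2*r) \<le> cdbl * vol x r"
  using someI_ex[OF doubling_const_ex] unfolding cdbl_def by auto

lemma vol_double_iter: "t > 0 \<Longrightarrow> vol x (2^n * t) \<le> cdbl^n * vol x t"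
proof (induction n)
  case 0 then show ?case by simp
next
  case (Suc n)
  have "vol x (2^Suc n * t) = vol x (2 * (2^n*t))" by (simp add: algebra_simps)
  also have "\<dots> \<le> cdbl * vol x (2^n*t)" using cdbl(2)[of "2^n*t" x] Suc by simp
  also have "\<dots> \<le> cdbl * (cdbl^n * vol x t)" using Suc cdbl(1) by (intro mult_left_mono) auto
  finally show ?case by (simp add: algebra_simps)
qed

lemma vol_dilate_ex: "\<exists>c\<ge>1. \<forall>x t. t > 0 \<longrightarrow> vol x (M*t) \<le> c * vol x t"
proof -
  obtain n where n: "M < 2^n" using real_arch_pow[of 2 M] by auto
  have "vol x (M*t) \<le> cdbl^n * vol x t" if "t > 0" for x t
  proof -
    have "vol x (M*t) \<le> vol x (2^n*t)" using n that by (intro vol_mono) auto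
    also have "\<dots> \<le> cdbl^n * vol x t" using vol_double_iter that by blast
    finally show ?thesis .
  qed
  moreover have "cdbl^n \<ge> 1" using cdbl(1) by simp
  ultimately show ?thesis by blast
qed

(* Disjoint balls of radius delta/2 around a delta-separated set inside a
   ball all have volume bounded below (doubling), so such sets have bounded cardinality;
   a maximal one is a finite delta-net.  Nets for all rational radii give a countable
   dense set, which is what makes the distance jointly Borel measurable. *)
lemma vol_lower_in_ball:
  fixes xc :: 'a
  assumes R: "R > 0" and \<delta>: "0 < \<delta>"
  shows "\<exists>c>0. \<forall>q\<in>ball xc R. c \<le> vol q (\<delta>/2)"
proof -
  obtain j where j: "4*R/\<delta> < 2^j" using real_arch_pow[of 2 "4*R/\<delta>"] by auto
  define c where "c = vol xc R / cdbl^j"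
  have "c \<le> vol q (\<delta>/2)" if q: "q \<in> ball xc R" for q
  proof -
    have "vol xc R \<le> vol q (2*R)"
    proof (rule vol_mono_set, rule subsetI)
      fix x assume "x \<in> ball xc R"
      then show "x \<in> ball q (2*R)" using q dist_triangle[of q x xc] by (simp add: dist_commute)
    qed
    also have "\<dots> \<le> vol q (2^j * (\<delta>/2))"
    proof (rule vol_mono)
      have "4*R < 2^j * \<delta>" using j \<delta> by (simp add: field_simps)
      then show "2*R \<le> 2^j * (\<delta>/2)" by simp
    qed
    also have "\<dots> \<le> cdbl^j * vol q (\<delta>/2)" using \<delta> by (intro vol_double_iter) auto
    finally show ?thesis unfolding c_def using cdbl(1) by (simp add: field_simps)
  qed
  moreover have "c > 0" unfolding c_def using vol_pos[OF R] cdbl(1) by auto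
  ultimately show ?thesis by blast
qed

lemma separated_card_bound:
  fixes xc :: 'a
  assumes R: "R > 0" and \<delta>: "0 < \<delta>" "\<delta> \<le> 1"
  shows "\<exists>N::nat. \<forall>F. F \<subseteq> ball xc R \<and> finite F \<and> separated \<delta> F \<longrightarrow> card F \<le> N"
proof -
  obtain c where c: "c > 0" and lb: "\<And>q. q \<in> ball xc R \<Longrightarrow> c \<le> vol q (\<delta>/2)"
    using vol_lower_in_ball[OF R \<delta>(1)] by blast
  define N where "N = nat (ceiling (vol xc (R+1) / c))"
  have "card F \<le> N" if F: "F \<subseteq> ball xc R" "finite F" "separated \<delta> F" for F
  proof -
    have "real (card F) * c = (\<Sum>q\<in>F. c)" by simp
    also have "\<dots> \<le> (\<Sum>q\<in>F. vol q (\<delta>/2))" using F lb by (intro sum_mono) auto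
    also have "\<dots> = measure \<mu> (\<Union>q\<in>F. ball q (\<delta>/2))"
      using F separated_disjoint_balls[OF F(3)] by (intro measure_finite_Union[symmetric]) auto
    also have "\<dots> \<le> vol xc (R+1)"
    proof (rule measure_mono_fmeasurable)
      show "(\<Union>q\<in>F. ball q (\<delta>/2)) \<subseteq> ball xc (R+1)"
      proof (intro UN_least subsetI)
        fix q z assume "q \<in> F" "z \<in> ball q (\<delta>/2)"
        then have "dist xc q < R" "dist q z < \<delta>/2" using F by auto
        then show "z \<in> ball xc (R+1)" using \<delta> dist_triangle[of xc z q] by simp
      qed
    qed (use F in auto)
    finally have "real (card F) \<le> vol xc (R+1) / c" using c by (simp add: field_simps)
    then show ?thesis unfolding N_def by linarith
  qed
  then show ?thesis by blast
qed

lemma finite_net: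
  fixes x0 :: 'a
  assumes R: "R > 0" and \<delta>: "0 < \<delta>" "\<delta> \<le> 1"
  shows "\<exists>F. finite F \<and> (\<forall>y\<in>ball x0 R. \<exists>q\<in>F. dist y q < \<delta>)"
proof -
  define Sep where "Sep F \<longleftrightarrow> F \<subseteq> ball x0 R \<and> finite F \<and> separated \<delta> F" for F
  obtain N where N: "\<And>F. Sep F \<Longrightarrow> card F \<le> N"
    using separated_card_bound[OF R \<delta>, of x0] unfolding Sep_def by blast
  define CS where "CS = card ` {F. Sep F}"
  have "CS \<subseteq> {..N}" using N unfolding CS_def by auto
  then have fin: "finite CS" by (rule finite_subset) simp
  have "Sep {}" unfolding Sep_def separated_def by simp
  then have "CS \<noteq> {}" unfolding CS_def by blast
  with fin have "Max CS \<in> CS" by (rule Max_in)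
  then obtain F where F: "Sep F" "card F = Max CS" unfolding CS_def by auto
  have "\<exists>q\<in>F. dist y q < \<delta>" if y: "y \<in> ball x0 R" for y
  proof (rule ccontr)
    assume "\<not> ?thesis"
    then have far: "\<forall>q\<in>F. \<delta> \<le> dist y q" by (auto simp: not_less)
    have "y \<notin> F"
    proof
      assume "y \<in> F"
      then have "\<delta> \<le> dist y y" using far by blast
      then show False using \<delta> by simp
    qed
    have "separated \<delta> (insert y F)" using F(1) unfolding Sep_def by (intro separated_insert far) simp
    then have "Sep (insert y F)" using F(1) y unfolding Sep_def by blast
    then have "card (insert y F) \<in> CS" unfolding CS_def by blast
    then have "card (insert y F) \<le> card F" using Max_ge[OF fin] F(2) by simp
    moreover have "card (insert y F) = Suc (card F)" using \<open>y \<notin> F\<close> F(1) unfolding Sep_def by simp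
    ultimately show False by simp
  qed
  moreover have "finite F" using F(1) unfolding Sep_def by blast
  ultimately show ?thesis by blast
qed

lemma countable_dense: "\<exists>Q::'a set. countable Q \<and> (\<forall>x e. e > 0 \<longrightarrow> (\<exists>q\<in>Q. dist x q < e))"
proof -
  fix x0 :: 'a
  define P where "P n k F \<longleftrightarrow> finite F \<and> (\<forall>y\<in>ball x0 (Suc n). \<exists>q\<in>F. dist y q < 1 / Suc k)" for n k :: nat and F
  have ex: "\<exists>F. P n k F" for n k :: nat
    unfolding P_def by (rule finite_net) auto
  define F where "F n k = (SOME F. P n k F)" for n k
  have FP: "P n k (F n k)" for n k unfolding F_def by (rule someI_ex[OF ex])
  have F: "\<And>n k. finite (F n k)" "\<And>n k y. y \<in> ball x0 (Suc n) \<Longrightarrow> \<exists>q\<in>F n k. dist y q < 1 / Suc k"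
    using FP unfolding P_def by auto
  define Q where "Q = (\<Union>n. \<Union>k. F n k)"
  have cF: "countable (F n k)" for n k using F(1) by (rule countable_finite)
  have "countable Q" unfolding Q_def by (simp add: cF)
  moreover have "\<exists>q\<in>Q. dist x q < e" if e: "e > 0" for x e
  proof -
    obtain n :: nat where n: "dist x0 x < n" using reals_Archimedean2 by blast
    obtain k :: nat where k: "inverse (Suc k) < e" using reals_Archimedean[OF e] by blast
    have "x \<in> ball x0 (Suc n)" using n by simp
    then obtain q where q: "q \<in> F n k" "dist x q < 1 / Suc k" using F(2) by blast
    have "q \<in> Q" unfolding Q_def using q(1) by blast
    moreover have "dist x q < e" using q(2) k by (simp add: inverse_eq_divide)
    ultimately show ?thesis by blast
  qed
  ultimately show ?thesis by blast
qed

(* The distance is measurable for the product measure: {d < t} is a countable union of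
   products of balls centred at points of the dense set. *)
lemma dist_measurable[measurable]: "(\<lambda>p. dist (fst p) (snd p)) \<in> borel_measurable (\<mu> \<Otimes>\<^sub>M \<mu>)"
proof -
  obtain Q :: "'a set" where Q: "countable Q" "\<And>x e. e > 0 \<Longrightarrow> \<exists>q\<in>Q. dist x q < e"
    using countable_dense by blast
  have "{w \<in> space (\<mu> \<Otimes>\<^sub>M \<mu>). dist (fst w) (snd w) < t} \<in> sets (\<mu> \<Otimes>\<^sub>M \<mu>)" for t
  proof -
    have eq: "{w \<in> space (\<mu> \<Otimes>\<^sub>M \<mu>). dist (fst w) (snd w) < t} =
       (\<Union>q\<in>Q. \<Union>s\<in>\<rat>. ball q s \<times> ball q (t - s))"
    proof (intro set_eqI iffI)
      fix w assume w: "w \<in> {w \<in> space (\<mu> \<Otimes>\<^sub>M \<mu>). dist (fst w) (snd w) < t}"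
      obtain x z where wxz: "w = (x,z)" by (cases w)
      have dt: "dist x z < t" using w wxz by simp
      define e where "e = (t - dist x z)/3"
      have e: "e > 0" using dt unfolding e_def by simp
      obtain q where q: "q \<in> Q" "dist x q < e" using Q(2)[OF e] by blast
      obtain s where s: "s \<in> \<rat>" "dist x q < s" "s < e" using Rats_dense_in_real[OF q(2)] by blast
      have s3: "3 * s < t - dist x z" using s(3) unfolding e_def by simp
      have "dist q z < t - s"
        using dist_triangle[of q z x] dist_commute[of q x] zero_le_dist[of x q] s(2) s3 by linarith
      then have "w \<in> ball q s \<times> ball q (t - s)" using wxz s by (simp add: dist_commute)
      then show "w \<in> (\<Union>q\<in>Q. \<Union>s\<in>\<rat>. ball q s \<times> ball q (t - s))" using q s by blast
    next
      fix w assume "w \<in> (\<Union>q\<in>Q. \<Union>s\<in>\<rat>. ball q s \<times> ball q (t - s))"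
      then obtain q s where "dist q (fst w) < s" "dist q (snd w) < t - s" by (auto simp: mem_Times_iff)
      then have "dist (fst w) (snd w) < t" using dist_triangle[of "fst w" "snd w" q] by (simp add: dist_commute)
      then show "w \<in> {w \<in> space (\<mu> \<Otimes>\<^sub>M \<mu>). dist (fst w) (snd w) < t}" by (simp add: space_pair_measure)
    qed
    have "(\<Union>s\<in>\<rat>. ball q s \<times> ball q (t - s)) \<in> sets (\<mu> \<Otimes>\<^sub>M \<mu>)" for q
      by (rule sets.countable_UN''[OF countable_rat]) (rule pair_measureI; simp)
    then show ?thesis unfolding eq by (intro sets.countable_UN''[OF Q(1)])
  qed
  then show ?thesis by (subst borel_measurable_iff_less) blast
qed

lemma sigma_finite: "sigma_finite_measure \<mu>"
proof
  fix x0 :: 'a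
  show "\<exists>A. countable A \<and> A \<subseteq> sets \<mu> \<and> \<Union> A = space \<mu> \<and> (\<forall>a\<in>A. emeasure \<mu> a \<noteq> \<infinity>)"
  proof (intro exI[of _ "range (\<lambda>n::nat. ball x0 n)"] conjI)
    show "\<Union> (range (\<lambda>n::nat. ball x0 (real n))) = space \<mu>"
      by (auto simp: space_mu) (metis reals_Archimedean2)
  qed auto
qed

definition cvol :: "real \<Rightarrow> real" where
  "cvol M = (SOME c. c \<ge> 1 \<and> (\<forall>x t. t > 0 \<longrightarrow> vol x (M*t) \<le> c * vol x t))"

lemma cvol: "cvol M \<ge> 1" "t > 0 \<Longrightarrow> vol x (M*t) \<le> cvol M * vol x t"
  using someI_ex[OF vol_dilate_ex[of M]] unfolding cvol_def[symmetric] by auto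

lemma cvol_pos[simp]: "0 < cvol M" using cvol(1)[of M] by linarith
lemma cvol_nz[simp]: "cvol M \<noteq> 0" using cvol(1)[of M] by linarith
lemma cvol_nn[simp]: "0 \<le> cvol M" using cvol(1)[of M] by linarith

lemma integrable_ball_indicator: "integrable \<mu> (\<lambda>z. B * indicator (ball c R) z :: real)"
  using ball_fin[of c R] by (intro integrable_mult_right integrable_real_indicator) auto

lemma integral_ball_bound:
  fixes f :: "'a \<Rightarrow> real"
  assumes f: "f \<in> borel_measurable \<mu>" and b: "\<And>z. \<bar>f z\<bar> \<le> B" and s: "\<And>z. f z \<noteq> 0 \<Longrightarrow> z \<in> ball c R"
  shows "integrable \<mu> f" "\<bar>integral\<^sup>L \<mu> f\<bar> \<le> B * vol c R"
proof -
  have bd: "\<bar>f z\<bar> \<le> B * indicator (ball c R) z" for z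
    using b[of z] s[of z] by (cases "z \<in> ball c R") auto
  show "integrable \<mu> f" by (rule integral_dominated(1)[OF f integrable_ball_indicator bd])
  show "\<bar>integral\<^sup>L \<mu> f\<bar> \<le> B * vol c R"
    using integral_dominated(2)[OF f integrable_ball_indicator bd] by simp
qed

lemma integral_ball_lower:
  fixes f :: "'a \<Rightarrow> real"
  assumes f: "integrable \<mu> f" and n: "\<And>z. 0 \<le> f z" and l: "\<And>z. z \<in> ball c R \<Longrightarrow> B \<le> f z" and B: "0 \<le> B"
  shows "B * vol c R \<le> integral\<^sup>L \<mu> f"
proof -
  have "(\<integral>z. B * indicator (ball c R) z \<partial>\<mu>) \<le> integral\<^sup>L \<mu> f"
  proof (rule integral_mono[OF integrable_ball_indicator f])
    fix z show "B * indicator (ball c R) z \<le> f z"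
      using l[of z] n[of z] by (cases "z \<in> ball c R") auto
  qed
  then show ?thesis by simp
qed

end

sublocale doubling_mm_space \<subseteq> sf: sigma_finite_measure \<mu>
  by (rule doubling_mm_space.sigma_finite) (rule doubling_mm_space_axioms)

lemma RD_space_doubling: "RD_space \<mu> \<Longrightarrow> doubling_mm_space \<mu>"
  unfolding RD_space_def regular_borel_def by unfold_locales auto

(* Admissibility in the form used below: with theta = 1/(1+k0) in (0,1),
   rho y <= C * rho(x)^theta * (rho x + d(x,y))^(1-theta). *)
definition adm_bound :: "('a::metric_space \<Rightarrow> real) \<Rightarrow> real \<Rightarrow> real \<Rightarrow> bool" where
  "adm_bound \<rho> C \<theta> \<longleftrightarrow> 0 < C \<and> 0 < \<theta> \<and> \<theta> < 1 \<and>
     (\<forall>x y. \<rho> y \<le> C * \<rho> x powr \<theta> * (\<rho> x + dist x y) powr (1 - \<theta>))"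

lemma admissible_adm_bound:
  assumes "admissible \<rho>"
  shows "\<exists>C \<theta>. adm_bound \<rho> C \<theta>"
proof -
  obtain C k0 where C: "0 < C" "0 < k0"
    and b: "\<And>x y. \<rho> y \<le> C * \<rho> x powr (1/(1+k0)) * (\<rho> x + dist x y) powr (k0/(1+k0))"
    using assms unfolding admissible_def by blast
  have "k0/(1+k0) = 1 - 1/(1+k0)" using C(2) by (simp add: field_simps)
  then have "adm_bound \<rho> C (1/(1+k0))"
    unfolding adm_bound_def using C b by (auto simp: field_simps)
  then show ?thesis by blast
qed

locale admissible_scale = doubling_mm_space +
  fixes \<rho> :: "'a \<Rightarrow> real"
  assumes adm: "admissible \<rho>"
begin

lemma rho_pos[simp]: "0 < \<rho> x"
  using adm unfolding admissible_def by auto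

lemma rho_nonneg[simp]: "0 \<le> \<rho> x"
  using rho_pos[of x] by linarith

definition C3 :: real where "C3 = fst (SOME p. adm_bound \<rho> (fst p) (snd p))"
definition theta :: real where "theta = snd (SOME p. adm_bound \<rho> (fst p) (snd p))"

lemma adm_bound_C3: "adm_bound \<rho> C3 theta"
proof -
  have "\<exists>p. adm_bound \<rho> (fst p) (snd p)" using admissible_adm_bound[OF adm] by auto
  then show ?thesis unfolding C3_def theta_def by (rule someI_ex)
qed

lemma C3_pos: "0 < C3" and theta: "0 < theta" "theta < 1"
  and adm_theta: "\<rho> y \<le> C3 * (\<rho> x) powr theta * (\<rho> x + dist x y) powr (1 - theta)"
  using adm_bound_C3 unfolding adm_bound_def by auto

lemma rho_linear_growth: "\<rho> y \<le> C3 * (\<rho> x + dist x y)"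
proof -
  have px: "0 < \<rho> x + dist x y" using rho_pos[of x] zero_le_dist[of x y] by linarith
  have "\<rho> y \<le> C3 * (\<rho> x) powr theta * (\<rho> x + dist x y) powr (1 - theta)" by (rule adm_theta)
  also have "\<dots> \<le> C3 * (\<rho> x + dist x y) powr theta * (\<rho> x + dist x y) powr (1 - theta)"
    using theta C3_pos less_imp_le[OF rho_pos[of x]] by (intro mult_right_mono mult_left_mono powr_mono2) auto
  also have "\<dots> = C3 * (\<rho> x + dist x y)"
    using px by (simp add: mult.assoc powr_add[symmetric])
  finally show ?thesis .
qed

lemma C3_ge1: "C3 \<ge> 1"
proof -
  fix x :: 'a
  have "\<rho> x \<le> C3 * \<rho> x" using rho_linear_growth[of x x] by simp
  then show ?thesis using rho_pos[of x] by (simp add: mult_le_cancel_right1)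
qed

lemma absorb_theta:
  assumes "P > 0" "L \<ge> 0" "c > 0" "P + L \<le> c * P powr theta * (P + L) powr (1 - theta)"
  shows "P + L \<le> c powr (1/theta) * P"
  using powr_absorb[of "P+L" P c theta] assms theta by auto

(* rho is comparable at points whose distance is at most M times rho: one direction is
   the linear growth bound, the other uses the admissibility inequality and absorption. *)
lemma rho_comparable: "\<exists>c\<ge>1. \<forall>u v. dist u v \<le> M * \<rho> u \<longrightarrow> \<rho> v \<le> c * \<rho> u \<and> \<rho> u \<le> c * \<rho> v"
proof -
  define M' where "M' = max M 0"
  define c1 where "c1 = C3 * (1 + M')"
  define c2 where "c2 = (C3 * (1 + M') powr (1 - theta)) powr (1/theta)"
  have c1: "c1 \<ge> 1" unfolding c1_def using C3_ge1 by (intro one_le_mult) (auto simp: M'_def)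
  have c2: "c2 \<ge> 0" unfolding c2_def by simp
  have "\<rho> v \<le> max c1 c2 * \<rho> u \<and> \<rho> u \<le> max c1 c2 * \<rho> v" if d: "dist u v \<le> M * \<rho> u" for u v
  proof
    have dM: "dist u v \<le> M' * \<rho> u" using d unfolding M'_def
      by (intro le_max0_mult) (auto intro: less_imp_le)
    have "\<rho> v \<le> C3 * (\<rho> u + dist u v)" by (rule rho_linear_growth)
    also have "\<dots> \<le> C3 * ((1 + M') * \<rho> u)" using dM C3_pos by (intro mult_left_mono) (auto simp: algebra_simps)
    also have "\<dots> = c1 * \<rho> u" unfolding c1_def by simp
    also have "\<dots> \<le> max c1 c2 * \<rho> u" by (intro mult_right_mono) auto
    finally show "\<rho> v \<le> max c1 c2 * \<rho> u" .
    show "\<rho> u \<le> max c1 c2 * \<rho> v"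
    proof (cases "\<rho> u \<le> \<rho> v")
      case True
      have "\<rho> v \<le> max c1 c2 * \<rho> v" using c1 by (intro le_mult_ge1) (auto intro: less_imp_le)
      then show ?thesis using True by linarith
    next
      case False
      have "\<rho> u \<le> C3 * (\<rho> v) powr theta * (\<rho> v + dist v u) powr (1 - theta)" by (rule adm_theta)
      also have "\<dots> \<le> C3 * (\<rho> v) powr theta * ((1 + M') * \<rho> u) powr (1 - theta)"
        using False dM theta C3_pos by (intro mult_left_mono powr_mono2) (auto simp: dist_commute algebra_simps)
      also have "\<dots> = (C3 * (1 + M') powr (1 - theta)) * (\<rho> v) powr theta * (\<rho> u) powr (1 - theta)"
        using M'_def by (simp add: powr_mult)
      finally have "\<rho> u \<le> (C3 * (1 + M') powr (1 - theta)) powr (1/theta) * \<rho> v"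
        using C3_pos M'_def by (intro powr_absorb theta) auto
      moreover have "c2 * \<rho> v \<le> max c1 c2 * \<rho> v" by (intro mult_right_mono) (auto intro: less_imp_le)
      ultimately show ?thesis unfolding c2_def[symmetric] by linarith
    qed
  qed
  moreover have "max c1 c2 \<ge> 1" using c1 by simp
  ultimately show ?thesis by blast
qed

definition r :: "'a \<Rightarrow> real" where "r z = Inf (range (\<lambda>w. \<rho> w + dist z w))"

lemma r_bdd: "bdd_below (range (\<lambda>w. \<rho> w + dist z w))"
  by (rule bdd_belowI[of _ 0]) auto

lemma r_le: "r z \<le> \<rho> w + dist z w"
  unfolding r_def by (rule cInf_lower[OF rangeI r_bdd])

lemma r_le_rho: "r z \<le> \<rho> z"
  using r_le[of z z] by simp

lemma rho_le_r: "\<rho> z \<le> C3 * r z"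
proof -
  have "\<rho> z / C3 \<le> r z" unfolding r_def
  proof (rule cInf_greatest)
    fix t assume "t \<in> range (\<lambda>w. \<rho> w + dist z w)"
    then obtain w where t: "t = \<rho> w + dist z w" by auto
    have "\<rho> z \<le> C3 * (\<rho> w + dist w z)" by (rule rho_linear_growth)
    then show "\<rho> z / C3 \<le> t" using t dist_commute[of w z] by (simp add: pos_divide_le_eq[OF C3_pos] mult.commute)
  qed auto
  then show ?thesis by (simp add: pos_divide_le_eq[OF C3_pos] mult.commute)
qed

lemma r_pos[simp]: "0 < r z"
proof (rule ccontr)
  assume "\<not> 0 < r z"
  then have "C3 * r z \<le> 0" using C3_pos by (simp add: mult_nonneg_nonpos)
  then show False using rho_le_r[of z] rho_pos[of z] by linarith
qed

lemma r_nonneg[simp]: "0 \<le> r z"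
  using r_pos[of z] by linarith

lemma r_lip: "r z \<le> r z' + dist z z'"
proof -
  have "r z - dist z z' \<le> r z'" unfolding r_def[of z']
  proof (rule cInf_greatest)
    fix t assume "t \<in> range (\<lambda>w. \<rho> w + dist z' w)"
    then obtain w where t: "t = \<rho> w + dist z' w" by auto
    have "r z \<le> \<rho> w + dist z w" by (rule r_le)
    then show "r z - dist z z' \<le> t" using t dist_triangle[of z w z'] by linarith
  qed auto
  then show ?thesis by simp
qed

lemma r_cont: "continuous_on UNIV r"
proof (rule lipschitz_on_continuous_on)
  show "1-lipschitz_on UNIV r"
  proof (rule lipschitz_onI)
    fix x y
    have "r x - r y \<le> dist x y" "r y - r x \<le> dist x y"
      using r_lip[of x y] r_lip[of y x] dist_commute[of x y] by linarith+
    then show "dist (r x) (r y) \<le> 1 * dist x y"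
      unfolding dist_real_def by (simp add: abs_le_iff)
  qed simp
qed

lemma r_meas[measurable]: "r \<in> borel_measurable \<mu>"
  by (subst measurable_cong_sets[OF sets_mu refl]) (rule borel_measurable_continuous_onI[OF r_cont])

lemma r_comparable: "\<exists>c\<ge>1. \<forall>u v. dist u v \<le> M * r u \<longrightarrow> r v \<le> c * r u \<and> r u \<le> c * r v"
proof -
  obtain c where c: "c \<ge> 1" "\<And>u v. dist u v \<le> max M 0 * \<rho> u \<Longrightarrow> \<rho> v \<le> c * \<rho> u \<and> \<rho> u \<le> c * \<rho> v"
    using rho_comparable[of "max M 0"] by blast
  have "r v \<le> (c * C3) * r u \<and> r u \<le> (c * C3) * r v" if d: "dist u v \<le> M * r u" for u v
  proof -
    have "M * r u \<le> max M 0 * r u" by (rule le_max0_mult) (auto intro: less_imp_le)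
    also have "\<dots> \<le> max M 0 * \<rho> u" using r_le_rho[of u] by (intro mult_left_mono) auto
    finally have "M * r u \<le> max M 0 * \<rho> u" .
    then have "dist u v \<le> max M 0 * \<rho> u" using d by linarith
    then have "\<rho> v \<le> c * \<rho> u \<and> \<rho> u \<le> c * \<rho> v" by (rule c(2))
    moreover have "c * \<rho> u \<le> c * (C3 * r u)" "c * \<rho> v \<le> c * (C3 * r v)"
      using c(1) rho_le_r by (auto intro: mult_left_mono)
    ultimately show ?thesis using r_le_rho[of u] r_le_rho[of v] by (simp add: mult.assoc)
  qed
  moreover have "c * C3 \<ge> 1" using c(1) C3_ge1 by (rule one_le_mult)
  ultimately show ?thesis by blast
qed

(* W u is the volume of the ball of radius r u around u; it replaces V(rho x, x). *)
definition W :: "'a \<Rightarrow> real" where "W u = vol u (r u)"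

lemma W_pos[simp]: "0 < W u" unfolding W_def by (rule vol_pos) simp

lemma vol_shift: "vol v s \<le> vol u (dist u v + s)"
proof (rule vol_mono_set, rule subsetI)
  fix x assume "x \<in> ball v s"
  then show "x \<in> ball u (dist u v + s)" using dist_triangle[of u x v] by simp
qed

lemma W_comparable: "\<exists>c\<ge>1. \<forall>u v. dist u v \<le> M * r u \<longrightarrow> W v \<le> c * W u \<and> W u \<le> c * W v"
proof -
  obtain c1 where c1: "c1 \<ge> 1" "\<And>u v. dist u v \<le> M * r u \<Longrightarrow> r v \<le> c1 * r u \<and> r u \<le> c1 * r v"
    using r_comparable[of M] by blast
  obtain c2 where c2: "c2 \<ge> 1" "\<And>x t. t > 0 \<Longrightarrow> vol x ((max M 0 + c1) * t) \<le> c2 * vol x t"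
    using vol_dilate_ex[of "max M 0 + c1"] by blast
  obtain c3 where c3: "c3 \<ge> 1" "\<And>x t. t > 0 \<Longrightarrow> vol x ((max M 0 * c1 + c1) * t) \<le> c3 * vol x t"
    using vol_dilate_ex[of "max M 0 * c1 + c1"] by blast
  have "W v \<le> max c2 c3 * W u \<and> W u \<le> max c2 c3 * W v" if d: "dist u v \<le> M * r u" for u v
  proof
    note cr = c1(2)[OF d]
    have dM: "dist u v \<le> max M 0 * r u" using d by (intro le_max0_mult) (auto intro: less_imp_le)
    have "W v \<le> vol u (dist u v + r v)" unfolding W_def by (rule vol_shift)
    also have "\<dots> \<le> vol u ((max M 0 + c1) * r u)" using dM cr by (intro vol_mono) (auto simp: algebra_simps)
    also have "\<dots> \<le> c2 * W u" unfolding W_def by (rule c2(2)) simp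
    also have "\<dots> \<le> max c2 c3 * W u" by (intro mult_right_mono) (auto intro: less_imp_le)
    finally show "W v \<le> max c2 c3 * W u" .
    have dM2: "dist v u \<le> max M 0 * c1 * r v"
    proof -
      have "max M 0 * r u \<le> max M 0 * (c1 * r v)" using cr by (intro mult_left_mono) auto
      then show ?thesis using dM by (simp add: dist_commute mult.assoc)
    qed
    have "W u \<le> vol v (dist v u + r u)" unfolding W_def by (rule vol_shift)
    also have "\<dots> \<le> vol v ((max M 0 * c1 + c1) * r v)" using dM2 cr by (intro vol_mono) (auto simp: algebra_simps)
    also have "\<dots> \<le> c3 * W v" unfolding W_def by (rule c3(2)) simp
    also have "\<dots> \<le> max c2 c3 * W v" by (intro mult_right_mono) (auto intro: less_imp_le)
    finally show "W u \<le> max c2 c3 * W v" .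
  qed
  moreover have "max c2 c3 \<ge> 1" using c2 by simp
  ultimately show ?thesis by blast
qed

lemma V_W_comparable: "\<exists>c\<ge>1. \<forall>x. W x \<le> V \<mu> (\<rho> x) x \<and> V \<mu> (\<rho> x) x \<le> c * W x"
proof -
  obtain c where c: "c \<ge> 1" "\<And>x t. t > 0 \<Longrightarrow> vol x (C3 * t) \<le> c * vol x t"
    using vol_dilate_ex[of C3] by blast
  have "W x \<le> V \<mu> (\<rho> x) x \<and> V \<mu> (\<rho> x) x \<le> c * W x" for x
  proof
    show "W x \<le> V \<mu> (\<rho> x) x" unfolding W_def V_def using r_le_rho[of x] by (rule vol_mono)
    have "V \<mu> (\<rho> x) x \<le> vol x (C3 * r x)" unfolding V_def using rho_le_r[of x] by (rule vol_mono)
    also have "\<dots> \<le> c * W x" unfolding W_def by (rule c(2)) simp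
    finally show "V \<mu> (\<rho> x) x \<le> c * W x" .
  qed
  then show ?thesis using c(1) by blast
qed

definition cr :: "real \<Rightarrow> real" where
  "cr M = (SOME c. c \<ge> 1 \<and> (\<forall>u v. dist u v \<le> M * r u \<longrightarrow> r v \<le> c * r u \<and> r u \<le> c * r v))"
definition cW :: "real \<Rightarrow> real" where
  "cW M = (SOME c. c \<ge> 1 \<and> (\<forall>u v. dist u v \<le> M * r u \<longrightarrow> W v \<le> c * W u \<and> W u \<le> c * W v))"

lemma cr: "cr M \<ge> 1" "dist u v \<le> M * r u \<Longrightarrow> r v \<le> cr M * r u" "dist u v \<le> M * r u \<Longrightarrow> r u \<le> cr M * r v"
  using someI_ex[OF r_comparable[of M]] unfolding cr_def[symmetric] by auto

lemma cW: "cW M \<ge> 1" "dist u v \<le> M * r u \<Longrightarrow> W v \<le> cW M * W u" "dist u v \<le> M * r u \<Longrightarrow> W u \<le> cW M * W v"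
  using someI_ex[OF W_comparable[of M]] unfolding cW_def[symmetric] by auto

lemma cr_pos[simp]: "0 < cr M" using cr(1)[of M] by linarith
lemma cr_nz[simp]: "cr M \<noteq> 0" using cr(1)[of M] by linarith
lemma cW_nz[simp]: "cW M \<noteq> 0" using cW(1)[of M] by linarith
lemma cr_nn[simp]: "0 \<le> cr M" using cr(1)[of M] by linarith
lemma cW_nn[simp]: "0 \<le> cW M" using cW(1)[of M] by linarith
lemma cW_pos[simp]: "0 < cW M" using cW(1)[of M] by linarith

abbreviation "c1 \<equiv> cr 1"

lemma W_nz[simp]: "W u \<noteq> 0" using W_pos[of u] by linarith
lemma W_nonneg[simp]: "0 \<le> W u" using W_pos[of u] by linarith
lemma r_nz[simp]: "r u \<noteq> 0" using r_pos[of u] by linarith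

definition a :: "'a \<Rightarrow> 'a \<Rightarrow> real" where "a x z = phi (dist x z / r z)"
definition S :: "'a \<Rightarrow> real" where "S x = (\<integral>z. a x z \<partial>\<mu>)"
definition psi :: "'a \<Rightarrow> 'a \<Rightarrow> real" where "psi x z = a x z / S x"
definition m :: "'a \<Rightarrow> real" where "m z = (\<integral>x. psi x z \<partial>\<mu>)"
definition K :: "'a \<Rightarrow> 'a \<Rightarrow> real" where "K x y = (\<integral>z. psi x z * psi y z / m z \<partial>\<mu>)"

lemma a_bounds[simp]: "0 \<le> a x z" "a x z \<le> 1"
  unfolding a_def by (auto simp: phi_bounds)

lemma a_nz: "a x z \<noteq> 0 \<Longrightarrow> dist x z < r z"
  unfolding a_def using phi_nz r_pos[of z] by (fastforce simp: field_simps)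

lemma a_one: "dist x z \<le> r z / 2 \<Longrightarrow> a x z = 1"
  unfolding a_def using r_pos[of z] by (intro phi_one) (simp add: field_simps)

lemma a_lip: "\<bar>a x z - a x' z\<bar> \<le> 2 * dist x x' / r z"
proof -
  have "\<bar>a x z - a x' z\<bar> \<le> 2 * \<bar>dist x z / r z - dist x' z / r z\<bar>"
    unfolding a_def by (rule phi_lip)
  also have "\<bar>dist x z / r z - dist x' z / r z\<bar> = \<bar>dist x z - dist x' z\<bar> / r z"
    using r_pos[of z] by (simp add: diff_divide_distrib[symmetric])
  also have "\<bar>dist x z - dist x' z\<bar> \<le> dist x x'"
    using dist_triangle[of x z x'] dist_triangle[of x' z x] dist_commute[of x x'] by (simp add: abs_le_iff)
  then have "2 * (\<bar>dist x z - dist x' z\<bar> / r z) \<le> 2 * dist x x' / r z"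
    using r_pos[of z] by (simp add: divide_right_mono)
  finally show ?thesis by simp
qed

lemma a_meas: "(\<lambda>p. a (fst p) (snd p)) \<in> borel_measurable (\<mu> \<Otimes>\<^sub>M \<mu>)"
  unfolding a_def phi_def by measurable

lemma a_meas': "(\<lambda>p. a (snd p) (fst p)) \<in> borel_measurable (\<mu> \<Otimes>\<^sub>M \<mu>)"
proof -
  have "(\<lambda>p. a (snd p) (fst p)) = (\<lambda>p. phi (dist (fst p) (snd p) / r (fst p)))"
    unfolding a_def by (simp add: dist_commute)
  then show ?thesis unfolding phi_def by simp
qed

lemma a_meas_z[measurable]: "a x \<in> borel_measurable \<mu>"
  using measurable_Pair2[OF a_meas, of x] by simp

lemma a_meas_x[measurable]: "(\<lambda>x. a x z) \<in> borel_measurable \<mu>"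
  using measurable_Pair2[OF a_meas', of z] by simp

lemma a_support: "a x z \<noteq> 0 \<Longrightarrow> r z \<le> c1 * r x \<and> r x \<le> c1 * r z \<and> dist x z < c1 * r x"
proof -
  assume nz: "a x z \<noteq> 0"
  have d: "dist x z < r z" by (rule a_nz[OF nz])
  have d1: "dist z x \<le> 1 * r z" using d by (simp add: dist_commute)
  have "r x \<le> c1 * r z" "r z \<le> c1 * r x" using cr(2)[OF d1] cr(3)[OF d1] by auto
  then show ?thesis using d by auto
qed

lemma S_int: "integrable \<mu> (a x)"
  by (rule integral_ball_bound(1)[where B=1 and c=x and R="c1 * r x"]) (auto dest: a_support)

lemma S_le_vol: "S x \<le> vol x (c1 * r x)"
proof -
  have "\<bar>S x\<bar> \<le> 1 * vol x (c1 * r x)" unfolding S_def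
    by (rule integral_ball_bound(2)) (auto dest: a_support)
  then show ?thesis by simp
qed

definition "sU = cvol c1"
definition "sL = 1 / cvol (2 * c1)"

lemma sL_pos[simp]: "0 < sL" unfolding sL_def by simp
lemma sU_pos[simp]: "0 < sU" unfolding sU_def by simp
lemma sL_nn[simp]: "0 \<le> sL" unfolding sL_def by simp
lemma sU_nn[simp]: "0 \<le> sU" unfolding sU_def by simp

lemma S_upper: "S x \<le> sU * W x"
  using S_le_vol[of x] cvol(2)[where t="r x" and M=c1 and x=x] unfolding sU_def W_def by simp

lemma S_lower: "sL * W x \<le> S x"
proof -
  define t where "t = r x / (2 * c1)"
  have t: "t > 0" unfolding t_def by simp
  have "t \<le> r x" unfolding t_def using cr(1)[of 1] by (simp add: field_simps)
  have "1 * vol x t \<le> S x" unfolding S_def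
  proof (rule integral_ball_lower[OF S_int])
    fix z assume z: "z \<in> ball x t"
    then have d1: "dist x z \<le> 1 * r x" using \<open>t \<le> r x\<close> by simp
    have "r x \<le> c1 * r z" by (rule cr(3)[OF d1])
    moreover have "2 * c1 * dist x z < r x" using z cr_pos[of 1] unfolding t_def by (simp add: field_simps)
    moreover have "c1 * (2 * dist x z) = 2 * c1 * dist x z" by simp
    ultimately have "c1 * (2 * dist x z) < c1 * r z" by linarith
    then have "2 * dist x z < r z" using cr_pos[of 1] mult_less_cancel_left_pos by blast
    then have "dist x z \<le> r z / 2" by simp
    then show "1 \<le> a x z" by (simp add: a_one)
  qed auto
  then have A: "cvol (2 * c1) * vol x t \<le> cvol (2 * c1) * S x" by (intro mult_left_mono) auto
  have "W x \<le> cvol (2 * c1) * vol x t"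
    using cvol(2)[OF t, where M="2 * c1" and x=x] unfolding W_def t_def by simp
  with A have "W x \<le> cvol (2 * c1) * S x" by linarith
  then show ?thesis unfolding sL_def by (simp add: field_simps)
qed

lemma S_pos[simp]: "0 < S x"
  using S_lower[of x] mult_pos_pos[OF sL_pos W_pos[of x]] by linarith

lemma S_nz[simp]: "S x \<noteq> 0" using S_pos[of x] by linarith
lemma S_nonneg[simp]: "0 \<le> S x" using S_pos[of x] by linarith

lemma S_meas[measurable]: "S \<in> borel_measurable \<mu>"
proof -
  have "(\<lambda>x. \<integral>z. a x z \<partial>\<mu>) \<in> borel_measurable \<mu>"
    by (rule sf.borel_measurable_lebesgue_integral) (use a_meas in \<open>simp add: case_prod_beta'\<close>)
  then show ?thesis unfolding S_def[abs_def] .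
qed

lemma psi_nonneg[simp]: "0 \<le> psi x z"
  unfolding psi_def by (simp add: less_imp_le)

lemma psi_le: "psi x z \<le> 1 / (sL * W x)"
proof -
  have "psi x z \<le> 1 / S x" unfolding psi_def using a_bounds(2)[of x z] S_pos[of x]
    by (intro divide_right_mono) (auto simp: less_imp_le)
  also have "\<dots> \<le> 1 / (sL * W x)" using S_lower[of x] by (simp add: frac_le)
  finally show ?thesis .
qed

lemma psi_nz: "psi x z \<noteq> 0 \<Longrightarrow> a x z \<noteq> 0"
  unfolding psi_def by auto

lemma psi_meas: "(\<lambda>p. psi (fst p) (snd p)) \<in> borel_measurable (\<mu> \<Otimes>\<^sub>M \<mu>)"
  unfolding psi_def using a_meas by measurable

lemma psi_meas': "(\<lambda>p. psi (snd p) (fst p)) \<in> borel_measurable (\<mu> \<Otimes>\<^sub>M \<mu>)"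
  unfolding psi_def using a_meas' by measurable

lemma psi_meas_z[measurable]: "psi x \<in> borel_measurable \<mu>"
  using measurable_Pair2[OF psi_meas, of x] by simp

lemma psi_meas_x[measurable]: "(\<lambda>x. psi x z) \<in> borel_measurable \<mu>"
  using measurable_Pair2[OF psi_meas', of z] by simp

lemma psi_int: "integrable \<mu> (psi x)"
  unfolding psi_def by (intro integrable_divide S_int)

lemma psi_int1: "(\<integral>z. psi x z \<partial>\<mu>) = 1"
  unfolding psi_def using S_pos[of x] by (simp add: S_def[symmetric])

(* psi(., z) is supported in B(z, r z), where W is comparable to W z. *)
abbreviation "cW1 \<equiv> cW 1"

lemma psi_le_z: "psi x z \<le> cW1 / (sL * W z)"
proof (cases "psi x z = 0")
  case True then show ?thesis by simp
next
  case False
  then have "dist x z < r z" using psi_nz a_nz by blast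
  then have d1: "dist z x \<le> 1 * r z" by (simp add: dist_commute)
  have "W z \<le> cW1 * W x" by (rule cW(3)[OF d1])
  have "psi x z \<le> 1 / (sL * W x)" by (rule psi_le)
  also have "\<dots> \<le> cW1 / (sL * W z)"
    using \<open>W z \<le> cW1 * W x\<close> by (simp add: field_simps)
  finally show ?thesis .
qed

lemma m_int: "integrable \<mu> (\<lambda>x. psi x z)"
  by (rule integral_ball_bound(1)[where B="cW1 / (sL * W z)" and c=z and R="r z"])
     (use psi_le_z in \<open>auto dest!: psi_nz a_nz simp: dist_commute\<close>)

(* Lower bound for the density m: psi x z is large for x in B(z, r z / 2). *)
definition "mL = 1 / (sU * cW1 * cvol 2)"

lemma mL_pos[simp]: "0 < mL" unfolding mL_def by simp
lemma mL_nn[simp]: "0 \<le> mL" unfolding mL_def by simp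

lemma m_lower: "mL \<le> m z"
proof -
  have B: "0 \<le> 1 / (sU * cW1 * W z)" by simp
  have "1 / (sU * cW1 * W z) * vol z (r z / 2) \<le> m z" unfolding m_def
  proof (rule integral_ball_lower[OF m_int _ _ B])
    fix x assume x: "x \<in> ball z (r z / 2)"
    then have "dist x z \<le> r z / 2" by (simp add: dist_commute)
    then have a1: "a x z = 1" by (rule a_one)
    have "dist z x < r z / 2" using x by simp
    then have d1: "dist z x \<le> 1 * r z" using r_pos[of z] by linarith
    have "W x \<le> cW1 * W z" by (rule cW(2)[OF d1])
    have "S x \<le> sU * (cW1 * W z)" using S_upper[of x] mult_left_mono[OF \<open>W x \<le> cW1 * W z\<close> sU_nn]
      by linarith
    then show "1 / (sU * cW1 * W z) \<le> psi x z" unfolding psi_def a1 using S_pos[of x]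
      by (simp add: frac_le mult.assoc)
  qed simp
  moreover have "W z \<le> cvol 2 * vol z (r z / 2)" using cvol(2)[where t="r z / 2" and M=2 and x=z] unfolding W_def by simp
  then have "W z / cvol 2 \<le> vol z (r z / 2)" by (simp add: pos_divide_le_eq mult.commute)
  then have "1 / (sU * cW1 * W z) * (W z / cvol 2) \<le> 1 / (sU * cW1 * W z) * vol z (r z / 2)"
    by (rule mult_left_mono) simp
  moreover have "1 / (sU * cW1 * W z) * (W z / cvol 2) = mL" unfolding mL_def by (simp add: field_simps)
  ultimately show ?thesis by linarith
qed

lemma m_pos[simp]: "0 < m z" using m_lower[of z] mL_pos by linarith
lemma m_nz[simp]: "m z \<noteq> 0" using m_pos[of z] by linarith
lemma m_nonneg[simp]: "0 \<le> m z" using m_pos[of z] by linarith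

lemma m_meas[measurable]: "m \<in> borel_measurable \<mu>"
proof -
  have "(\<lambda>z. \<integral>x. psi x z \<partial>\<mu>) \<in> borel_measurable \<mu>"
    by (rule sf.borel_measurable_lebesgue_integral) (use psi_meas' in \<open>simp add: case_prod_beta'\<close>)
  then show ?thesis unfolding m_def[abs_def] .
qed

lemma psi_average_bound:
  assumes h: "h \<in> borel_measurable \<mu>" and b: "\<And>z. \<bar>h z\<bar> \<le> B"
  shows "integrable \<mu> (\<lambda>z. psi x z * h z)" "\<bar>\<integral>z. psi x z * h z \<partial>\<mu>\<bar> \<le> B"
proof -
  have bd: "\<bar>psi x z * h z\<bar> \<le> B * psi x z" for z
    using mult_left_mono[OF b[of z] psi_nonneg[of x z]] by (simp add: abs_mult mult.commute)
  have gi: "integrable \<mu> (\<lambda>z. B * psi x z)" using psi_int[of x] by simp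
  have m: "(\<lambda>z. psi x z * h z) \<in> borel_measurable \<mu>" using h by measurable
  show "integrable \<mu> (\<lambda>z. psi x z * h z)" by (rule integral_dominated(1)[OF m gi bd])
  have "\<bar>\<integral>z. psi x z * h z \<partial>\<mu>\<bar> \<le> (\<integral>z. B * psi x z \<partial>\<mu>)" by (rule integral_dominated(2)[OF m gi bd])
  also have "\<dots> = B" using psi_int1[of x] by simp
  finally show "\<bar>\<integral>z. psi x z * h z \<partial>\<mu>\<bar> \<le> B" .
qed

definition "kB = 1 / (sL * mL)"

lemma kB_pos[simp]: "0 < kB" unfolding kB_def by simp

lemma psi_over_m_bound: "\<bar>psi y z / m z\<bar> \<le> kB / W y"
proof -
  have "psi y z / m z \<le> (1 / (sL * W y)) / mL"
    using psi_le[of y z] m_lower[of z] by (intro frac_le) auto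
  then show ?thesis unfolding kB_def by (simp add: field_simps)
qed

lemma K_alt: "K x y = (\<integral>z. psi x z * (psi y z / m z) \<partial>\<mu>)"
  unfolding K_def by simp

lemma K_int: "integrable \<mu> (\<lambda>z. psi x z * (psi y z / m z))"
  by (rule psi_average_bound(1)[OF _ psi_over_m_bound]) measurable

lemma K_int': "integrable \<mu> (\<lambda>z. psi x z * psi y z / m z)"
  using K_int[of x y] by simp

lemma K_nonneg[simp]: "0 \<le> K x y"
  unfolding K_def by (rule Bochner_Integration.integral_nonneg) simp

lemma K_sym: "K x y = K y x"
  unfolding K_def by (simp add: mult.commute)

lemma K_le_W_y: "K x y \<le> kB / W y"
proof -
  have "\<bar>\<integral>z. psi x z * (psi y z / m z) \<partial>\<mu>\<bar> \<le> kB / W y"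
    by (rule psi_average_bound(2)[where h="\<lambda>z. psi y z / m z"]) (use psi_over_m_bound in auto)
  then show ?thesis unfolding K_alt by simp
qed

lemma K_le_W_x: "K x y \<le> kB / W x"
  using K_le_W_y[of y x] K_sym[of x y] by simp

(* K x y is nonzero only if some z lies in both supports, so d(x,y) < 2 c1 min(r x, r y). *)
lemma K_support: "K x y \<noteq> 0 \<Longrightarrow> dist x y < 2 * c1 * r x \<and> dist x y < 2 * c1 * r y"
proof -
  assume "K x y \<noteq> 0"
  then obtain z where "psi x z * psi y z / m z \<noteq> 0" unfolding K_def using integral_nonzero_witness by blast
  then have ax: "a x z \<noteq> 0" and ay: "a y z \<noteq> 0" using psi_nz by auto
  from a_support[OF ax] a_support[OF ay] a_nz[OF ax] a_nz[OF ay]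
  have "dist x z < r z" "dist y z < r z" "r z \<le> c1 * r x" "r z \<le> c1 * r y" by auto
  moreover have "dist x y \<le> dist x z + dist y z" using dist_triangle[of x y z] by (simp add: dist_commute)
  ultimately show ?thesis by linarith
qed

lemma K_meas[measurable]: "(\<lambda>x. K x y) \<in> borel_measurable \<mu>"
proof -
  have "(\<lambda>p. psi (fst p) (snd p) * psi y (snd p) / m (snd p)) \<in> borel_measurable (\<mu> \<Otimes>\<^sub>M \<mu>)"
    using psi_meas by measurable
  then have "(\<lambda>x. \<integral>z. psi x z * psi y z / m z \<partial>\<mu>) \<in> borel_measurable \<mu>"
    by (intro sf.borel_measurable_lebesgue_integral) (simp add: case_prod_beta')
  then show ?thesis unfolding K_def .
qed

(* Property (v): by Tonelli, integrating K(., y) means integrating psi y z against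
   (integral over x of psi x z) / m z = 1. *)
lemma K_total: "(\<integral>\<^sup>+ x. ennreal (K x y) \<partial>\<mu>) = 1"
proof -
  interpret pf: pair_sigma_finite \<mu> \<mu>
    by (intro pair_sigma_finite.intro sigma_finite)
  define F where "F x z = psi x z * psi y z / m z" for x z
  have Fn: "0 \<le> F x z" for x z unfolding F_def by simp
  have Fm: "(\<lambda>(x, z). ennreal (F x z)) \<in> borel_measurable (\<mu> \<Otimes>\<^sub>M \<mu>)"
  proof -
    have "(\<lambda>p. psi (fst p) (snd p) * psi y (snd p) / m (snd p)) \<in> borel_measurable (\<mu> \<Otimes>\<^sub>M \<mu>)"
      using psi_meas by measurable
    then show ?thesis unfolding F_def by (simp add: case_prod_beta')
  qed
  have "(\<integral>\<^sup>+ x. ennreal (K x y) \<partial>\<mu>) = (\<integral>\<^sup>+ x. (\<integral>\<^sup>+ z. ennreal (F x z) \<partial>\<mu>) \<partial>\<mu>)"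
  proof (rule nn_integral_cong)
    fix x
    show "ennreal (K x y) = (\<integral>\<^sup>+ z. ennreal (F x z) \<partial>\<mu>)"
      unfolding K_def F_def by (rule nn_integral_eq_integral[symmetric]) (use K_int' in auto)
  qed
  also have "\<dots> = (\<integral>\<^sup>+ z. (\<integral>\<^sup>+ x. ennreal (F x z) \<partial>\<mu>) \<partial>\<mu>)"
    by (rule pf.Fubini'[symmetric]) (rule Fm)
  also have "\<dots> = (\<integral>\<^sup>+ z. ennreal (psi y z) \<partial>\<mu>)"
  proof (rule nn_integral_cong)
    fix z
    have ig: "integrable \<mu> (\<lambda>x. psi x z * (psi y z / m z))" using m_int[of z] by simp
    have "(\<integral>\<^sup>+ x. ennreal (F x z) \<partial>\<mu>) = ennreal (\<integral>x. psi x z * (psi y z / m z) \<partial>\<mu>)"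
      unfolding F_def by (subst nn_integral_eq_integral[symmetric]) (use ig in \<open>auto simp: mult.assoc\<close>)
    also have "(\<integral>x. psi x z * (psi y z / m z) \<partial>\<mu>) = m z * (psi y z / m z)"
      unfolding m_def by simp
    also have "\<dots> = psi y z" by simp
    finally show "(\<integral>\<^sup>+ x. ennreal (F x z) \<partial>\<mu>) = ennreal (psi y z)" .
  qed
  also have "\<dots> = ennreal (\<integral>z. psi y z \<partial>\<mu>)"
    by (rule nn_integral_eq_integral) (use psi_int in auto)
  also have "\<dots> = 1" by (simp add: psi_int1)
  finally show ?thesis .
qed

definition "R1 = 1 + c1 * c1"

lemma R1_ge1: "1 \<le> R1" unfolding R1_def by simp
lemma R1_pos[simp]: "0 < R1" using R1_ge1 by linarith
lemma R1_nn[simp]: "0 \<le> R1" using R1_ge1 by linarith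

lemma c1_le_sq: "c1 \<le> c1 * c1"
  using cr(1)[of 1] le_mult_ge1[of c1 c1] by simp

lemma diff_a_support:
  assumes d: "dist y y' \<le> r y" and nz: "a y z \<noteq> 0 \<or> a y' z \<noteq> 0"
  shows "dist y z < R1 * r y" "r y \<le> c1 * c1 * r z"
proof -
  have d1: "dist y y' \<le> 1 * r y" using d by simp
  have ry': "r y' \<le> c1 * r y" "r y \<le> c1 * r y'" using cr(2)[OF d1] cr(3)[OF d1] by auto
  have "dist y z < R1 * r y \<and> r y \<le> c1 * c1 * r z"
  proof (cases "a y z \<noteq> 0")
    case True
    from a_support[OF True] have "dist y z < c1 * r y" "r y \<le> c1 * r z" by auto
    moreover have "c1 * r y \<le> R1 * r y" unfolding R1_def by (rule mult_right_mono) (use c1_le_sq in linarith, simp)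
    moreover have "c1 * r z \<le> c1 * c1 * r z" using c1_le_sq by (intro mult_right_mono) auto
    ultimately show ?thesis by linarith
  next
    case False
    then have ay': "a y' z \<noteq> 0" using nz by auto
    from a_support[OF ay'] have h: "dist y' z < c1 * r y'" "r y' \<le> c1 * r z" by auto
    have "c1 * r y' \<le> c1 * (c1 * r y)" using ry' by (intro mult_left_mono) auto
    then have "dist y' z < c1 * (c1 * r y)" using h by linarith
    then have "dist y' z < c1 * c1 * r y" by (simp add: mult.assoc)
    moreover have "dist y z \<le> dist y y' + dist y' z" by (rule dist_triangle)
    ultimately have "dist y z < R1 * r y" using d unfolding R1_def by (simp add: algebra_simps)
    moreover have "c1 * r y' \<le> c1 * (c1 * r z)" using h by (intro mult_left_mono) auto
    then have "r y \<le> c1 * (c1 * r z)" using ry' by linarith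
    then have "r y \<le> c1 * c1 * r z" by (simp add: mult.assoc)
    ultimately show ?thesis by simp
  qed
  then show "dist y z < R1 * r y" "r y \<le> c1 * c1 * r z" by auto
qed

lemma diff_a_bound:
  assumes d: "dist y y' \<le> r y"
  shows "\<bar>a y z - a y' z\<bar> \<le> 2 * (c1 * c1) * dist y y' / r y"
proof (cases "a y z \<noteq> 0 \<or> a y' z \<noteq> 0")
  case False then show ?thesis by simp
next
  case True
  have rz: "r y \<le> c1 * c1 * r z" by (rule diff_a_support(2)[OF d True])
  have "\<bar>a y z - a y' z\<bar> \<le> 2 * dist y y' / r z" by (rule a_lip)
  also have "\<dots> \<le> 2 * dist y y' / (r y / (c1 * c1))"
  proof (rule divide_left_mono)
    show "r y / (c1 * c1) \<le> r z" using rz by (simp add: pos_divide_le_eq mult.commute)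
  qed auto
  also have "\<dots> = 2 * (c1 * c1) * dist y y' / r y" by (simp add: field_simps)
  finally show ?thesis .
qed

lemma diff_S_bound:
  assumes d: "dist y y' \<le> r y"
  shows "\<bar>S y - S y'\<bar> \<le> 2 * (c1 * c1) * dist y y' / r y * (cvol R1 * W y)"
proof -
  have "S y - S y' = (\<integral>z. a y z - a y' z \<partial>\<mu>)"
    unfolding S_def by (rule Bochner_Integration.integral_diff[symmetric]) (rule S_int)+
  also have "\<bar>\<dots>\<bar> \<le> 2 * (c1 * c1) * dist y y' / r y * vol y (R1 * r y)"
  proof (rule integral_ball_bound(2))
    show "(\<lambda>z. a y z - a y' z) \<in> borel_measurable \<mu>" by measurable
    show "\<bar>a y z - a y' z\<bar> \<le> 2 * (c1 * c1) * dist y y' / r y" for z by (rule diff_a_bound[OF d])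
    show "z \<in> ball y (R1 * r y)" if "a y z - a y' z \<noteq> 0" for z
      using diff_a_support(1)[OF d] that by auto
  qed
  also have "vol y (R1 * r y) \<le> cvol R1 * W y" unfolding W_def by (rule cvol(2)) simp
  then have "2 * (c1 * c1) * dist y y' / r y * vol y (R1 * r y) \<le> 2 * (c1 * c1) * dist y y' / r y * (cvol R1 * W y)"
    by (intro mult_left_mono) auto
  finally show ?thesis .
qed

definition "pL = 2 * (c1 * c1) / sL + 2 * (c1 * c1) * cvol R1 * cW1 / (sL * sL)"

lemma pL_pos[simp]: "0 < pL" unfolding pL_def by (intro add_pos_pos divide_pos_pos mult_pos_pos) auto
lemma pL_nn[simp]: "0 \<le> pL" unfolding pL_def by simp

lemma diff_psi_support:
  assumes d: "dist y y' \<le> r y" and nz: "psi y z - psi y' z \<noteq> 0"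
  shows "dist y z < R1 * r y"
proof -
  have "a y z \<noteq> 0 \<or> a y' z \<noteq> 0" using nz unfolding psi_def by auto
  then show ?thesis by (rule diff_a_support(1)[OF d])
qed

lemma S_prod_lower:
  assumes d: "dist y y' \<le> r y"
  shows "(sL * W y) * (sL * W y / cW1) \<le> S y * S y'"
proof -
  have "W y \<le> cW1 * W y'" using d by (intro cW(3)) simp
  then have "sL * W y / cW1 \<le> sL * W y'" by (simp add: field_simps)
  then have "sL * W y / cW1 \<le> S y'" using S_lower[of y'] by linarith
  then show ?thesis using S_lower[of y] by (intro mult_mono) auto
qed

(* The bump difference splits as (a y - a y') / S y + a y' (S y' - S y) / (S y S y');
   each term is O(d(y,y') / (r y W y)) by the cut-off and mass estimates. *)
lemma diff_psi_bound:
  assumes d: "dist y y' \<le> r y"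
  shows "\<bar>psi y z - psi y' z\<bar> \<le> pL * dist y y' / (r y * W y)"
proof -
  define D where "D = dist y y'"
  have D: "0 \<le> D" unfolding D_def by simp
  have eq: "psi y z - psi y' z = (a y z - a y' z) / S y + a y' z * (S y' - S y) / (S y * S y')"
    unfolding psi_def by (simp add: field_simps)
  have T1: "\<bar>(a y z - a y' z) / S y\<bar> \<le> (2 * (c1 * c1) * D / r y) / (sL * W y)"
  proof -
    have "\<bar>(a y z - a y' z) / S y\<bar> = \<bar>a y z - a y' z\<bar> / S y" by simp
    also have "\<dots> \<le> (2 * (c1 * c1) * D / r y) / (sL * W y)"
      using diff_a_bound[OF d, of z] S_lower[of y] unfolding D_def by (intro frac_le) auto
    finally show ?thesis .
  qed
  have num: "\<bar>a y' z * (S y' - S y)\<bar> \<le> 2 * (c1 * c1) * D / r y * (cvol R1 * W y)"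
  proof -
    have "\<bar>a y' z * (S y' - S y)\<bar> = a y' z * \<bar>S y - S y'\<bar>" by (simp add: abs_mult abs_minus_commute)
    also have "\<dots> \<le> 1 * \<bar>S y - S y'\<bar>" by (intro mult_right_mono) auto
    also have "\<dots> \<le> 2 * (c1 * c1) * D / r y * (cvol R1 * W y)" using diff_S_bound[OF d] unfolding D_def by simp
    finally show ?thesis .
  qed
  have T2: "\<bar>a y' z * (S y' - S y) / (S y * S y')\<bar> \<le>
      (2 * (c1 * c1) * D / r y * (cvol R1 * W y)) / ((sL * W y) * (sL * W y / cW1))"
  proof -
    have "\<bar>a y' z * (S y' - S y) / (S y * S y')\<bar> = \<bar>a y' z * (S y' - S y)\<bar> / (S y * S y')"
      by (simp add: abs_mult)
    also have "\<dots> \<le> (2 * (c1 * c1) * D / r y * (cvol R1 * W y)) / ((sL * W y) * (sL * W y / cW1))"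
      using num S_prod_lower[OF d] by (intro frac_le) (auto simp: D)
    finally show ?thesis .
  qed
  have "\<bar>psi y z - psi y' z\<bar> \<le> (2 * (c1 * c1) * D / r y) / (sL * W y)
      + (2 * (c1 * c1) * D / r y * (cvol R1 * W y)) / ((sL * W y) * (sL * W y / cW1))"
    unfolding eq using T1 T2 abs_triangle_ineq[of "(a y z - a y' z) / S y" "a y' z * (S y' - S y) / (S y * S y')"]
    by linarith
  also have "\<dots> = pL * D / (r y * W y)"
    unfolding pL_def by (simp add: field_simps)
  finally show ?thesis unfolding D_def .
qed

definition "R2 = cr R1 + R1"
definition "R3 = R1 * (cr R1 * cr R1 + 1)"
definition "kL = pL / mL"
definition "kM = pL * pL * cvol R1 / mL"

lemma kB_nn[simp]: "0 \<le> kB" using kB_pos by linarith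
lemma kL_nn[simp]: "0 \<le> kL" unfolding kL_def by simp
lemma kM_nn[simp]: "0 \<le> kM" unfolding kM_def by simp

lemma diff_psi_over_m_bound:
  assumes d: "dist y y' \<le> r y"
  shows "\<bar>(psi y z - psi y' z) / m z\<bar> \<le> (pL * dist y y' / (r y * W y)) / mL"
proof -
  have "\<bar>(psi y z - psi y' z) / m z\<bar> = \<bar>psi y z - psi y' z\<bar> / m z" by simp
  also have "\<dots> \<le> (pL * dist y y' / (r y * W y)) / mL"
    using diff_psi_bound[OF d, of z] m_lower[of z] by (intro frac_le) auto
  finally show ?thesis .
qed

lemma K_diff_integral: "K x y - K x y' = (\<integral>z. psi x z * ((psi y z - psi y' z) / m z) \<partial>\<mu>)"
proof -
  have "K x y - K x y' = (\<integral>z. psi x z * (psi y z / m z) - psi x z * (psi y' z / m z) \<partial>\<mu>)"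
    unfolding K_alt by (rule Bochner_Integration.integral_diff[symmetric]) (rule K_int)+
  also have "\<dots> = (\<integral>z. psi x z * ((psi y z - psi y' z) / m z) \<partial>\<mu>)"
    by (rule Bochner_Integration.integral_cong) (auto simp: diff_divide_distrib right_diff_distrib)
  finally show ?thesis .
qed

lemma K_diff_y_near:
  assumes d: "dist y y' \<le> r y"
  shows "\<bar>K x y - K x y'\<bar> \<le> kL * dist y y' / (r y * W y)"
    and "K x y - K x y' \<noteq> 0 \<Longrightarrow> dist x y < R2 * r y"
proof -
  have "\<bar>K x y - K x y'\<bar> \<le> (pL * dist y y' / (r y * W y)) / mL"
    unfolding K_diff_integral by (rule psi_average_bound(2)) (use diff_psi_over_m_bound[OF d] in auto)
  then show "\<bar>K x y - K x y'\<bar> \<le> kL * dist y y' / (r y * W y)" unfolding kL_def by (simp add: field_simps)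
next
  assume "K x y - K x y' \<noteq> 0"
  then obtain z where "psi x z * ((psi y z - psi y' z) / m z) \<noteq> 0"
    unfolding K_diff_integral using integral_nonzero_witness by blast
  then have px: "psi x z \<noteq> 0" and dp: "psi y z - psi y' z \<noteq> 0" by auto
  have dyz: "dist y z < R1 * r y" by (rule diff_psi_support[OF d dp])
  have dxz: "dist x z < r z" using px psi_nz a_nz by blast
  have "r z \<le> cr R1 * r y" using dyz by (intro cr(2)) simp
  moreover have "dist x y \<le> dist x z + dist y z" using dist_triangle[of x y z] by (simp add: dist_commute)
  ultimately show "dist x y < R2 * r y" using dyz dxz unfolding R2_def by (simp add: algebra_simps)
qed

lemma K_mixed_integral:
  "K x y - K x y' - K x' y + K x' y' = (\<integral>z. (psi x z - psi x' z) * ((psi y z - psi y' z) / m z) \<partial>\<mu>)"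
proof -
  define h where "h z = (psi y z - psi y' z) / m z" for z
  have int: "integrable \<mu> (\<lambda>z. psi u z * h z)" for u
  proof -
    have "integrable \<mu> (\<lambda>z. psi u z * (psi y z / m z) - psi u z * (psi y' z / m z))"
      by (intro Bochner_Integration.integrable_diff K_int)
    then show ?thesis unfolding h_def by (simp add: diff_divide_distrib right_diff_distrib)
  qed
  have "K x y - K x y' - K x' y + K x' y' = (K x y - K x y') - (K x' y - K x' y')" by simp
  also have "\<dots> = (\<integral>z. psi x z * h z \<partial>\<mu>) - (\<integral>z. psi x' z * h z \<partial>\<mu>)"
    unfolding K_diff_integral h_def ..
  also have "\<dots> = (\<integral>z. psi x z * h z - psi x' z * h z \<partial>\<mu>)"
    by (rule Bochner_Integration.integral_diff[symmetric]) (rule int)+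
  also have "\<dots> = (\<integral>z. (psi x z - psi x' z) * h z \<partial>\<mu>)"
    by (simp add: left_diff_distrib)
  finally show ?thesis unfolding h_def .
qed

(* Lipschitz bound for the mixed difference when both increments are below the scale,
   together with its support: the product of the two psi-differences is bounded and
   supported in a ball of radius R1 r x. *)
lemma K_mixed_near:
  assumes dx: "dist x x' \<le> r x" and dy: "dist y y' \<le> r y"
  shows "\<bar>K x y - K x y' - K x' y + K x' y'\<bar> \<le> kM * dist x x' * dist y y' / (r x * r y * W y)"
    and "K x y - K x y' - K x' y + K x' y' \<noteq> 0 \<Longrightarrow> dist x y < R3 * r y"
proof -
  define h where "h z = (psi y z - psi y' z) / m z" for z
  define B where "B = (pL * dist x x' / (r x * W x)) * ((pL * dist y y' / (r y * W y)) / mL)"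
  have bnd: "\<bar>(psi x z - psi x' z) * h z\<bar> \<le> B" for z
  proof -
    have "\<bar>(psi x z - psi x' z) * h z\<bar> = \<bar>psi x z - psi x' z\<bar> * \<bar>h z\<bar>" by (simp add: abs_mult)
    also have "\<dots> \<le> B" unfolding B_def h_def
      using diff_psi_bound[OF dx, of z] diff_psi_over_m_bound[OF dy, of z] by (intro mult_mono) auto
    finally show ?thesis .
  qed
  have "\<bar>\<integral>z. (psi x z - psi x' z) * h z \<partial>\<mu>\<bar> \<le> B * vol x (R1 * r x)"
  proof (rule integral_ball_bound(2))
    show "(\<lambda>z. (psi x z - psi x' z) * h z) \<in> borel_measurable \<mu>" unfolding h_def by measurable
    show "\<bar>(psi x z - psi x' z) * h z\<bar> \<le> B" for z by (rule bnd)
    show "z \<in> ball x (R1 * r x)" if "(psi x z - psi x' z) * h z \<noteq> 0" for z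
      using diff_psi_support[OF dx, of z] that by auto
  qed
  also have "B * vol x (R1 * r x) \<le> B * (cvol R1 * W x)"
    by (intro mult_left_mono) (auto simp: B_def W_def intro: cvol(2))
  also have "B * (cvol R1 * W x) = kM * dist x x' * dist y y' / (r x * r y * W y)"
    unfolding B_def kM_def by (simp add: field_simps)
  finally show "\<bar>K x y - K x y' - K x' y + K x' y'\<bar> \<le> kM * dist x x' * dist y y' / (r x * r y * W y)"
    unfolding K_mixed_integral h_def .
next
  assume "K x y - K x y' - K x' y + K x' y' \<noteq> 0"
  then obtain z where "(psi x z - psi x' z) * ((psi y z - psi y' z) / m z) \<noteq> 0"
    unfolding K_mixed_integral using integral_nonzero_witness by blast
  then have dp1: "psi x z - psi x' z \<noteq> 0" and dp2: "psi y z - psi y' z \<noteq> 0" by auto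
  have dxz: "dist x z < R1 * r x" by (rule diff_psi_support[OF dx dp1])
  have dyz: "dist y z < R1 * r y" by (rule diff_psi_support[OF dy dp2])
  have rz: "r z \<le> cr R1 * r y" using dyz by (intro cr(2)) simp
  have rx: "r x \<le> cr R1 * r z" using dxz by (intro cr(3)) simp
  have "r x \<le> cr R1 * (cr R1 * r y)" using rx mult_left_mono[OF rz cr_nn[of R1]] by linarith
  then have "R1 * r x \<le> R1 * (cr R1 * (cr R1 * r y))" by (intro mult_left_mono) auto
  moreover have "dist x y \<le> dist x z + dist y z" using dist_triangle[of x y z] by (simp add: dist_commute)
  moreover have "R3 * r y = R1 * r y + R1 * (cr R1 * (cr R1 * r y))" unfolding R3_def by (simp add: algebra_simps)
  ultimately show "dist x y < R3 * r y" using dxz dyz by linarith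
qed

(* The second clause is what later allows replacing W x by the sum
   V(rho x, x) + V(rho y, y). *)
definition ctrl :: "'a \<Rightarrow> 'a \<Rightarrow> real \<Rightarrow> real \<Rightarrow> real \<Rightarrow> bool" where
  "ctrl x y T Q B \<longleftrightarrow> \<bar>T\<bar> \<le> Q \<and> (T \<noteq> 0 \<longrightarrow> W y \<le> B * W x)"

lemma ctrl_zero: "T = 0 \<Longrightarrow> 0 \<le> Q \<Longrightarrow> ctrl x y T Q B"
  unfolding ctrl_def by simp

lemma ctrl_mono: "ctrl x y T Q B \<Longrightarrow> Q \<le> Q' \<Longrightarrow> B \<le> B' \<Longrightarrow> ctrl x y T Q' B'"
proof -
  assume a: "ctrl x y T Q B" "Q \<le> Q'" "B \<le> B'"
  have "B * W x \<le> B' * W x" using a(3) by (intro mult_right_mono) auto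
  have h: "\<bar>T\<bar> \<le> Q" "T \<noteq> 0 \<longrightarrow> W y \<le> B * W x" using a(1) unfolding ctrl_def by auto
  show "ctrl x y T Q' B'" unfolding ctrl_def
  proof (intro conjI impI)
    show "\<bar>T\<bar> \<le> Q'" using h(1) a(2) by linarith
    assume "T \<noteq> 0" then have "W y \<le> B * W x" using h(2) by blast
    then show "W y \<le> B' * W x" using \<open>B * W x \<le> B' * W x\<close> by linarith
  qed
qed

lemma ctrl_diff: "ctrl x y T1 Q1 B1 \<Longrightarrow> ctrl x y T2 Q2 B2 \<Longrightarrow> ctrl x y (T1 - T2) (Q1 + Q2) (max B1 B2)"
  unfolding ctrl_def
proof (intro conjI impI)
  assume a: "\<bar>T1\<bar> \<le> Q1 \<and> (T1 \<noteq> 0 \<longrightarrow> W y \<le> B1 * W x)" "\<bar>T2\<bar> \<le> Q2 \<and> (T2 \<noteq> 0 \<longrightarrow> W y \<le> B2 * W x)"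
  show "\<bar>T1 - T2\<bar> \<le> Q1 + Q2" using a by linarith
  assume "T1 - T2 \<noteq> 0"
  then have "T1 \<noteq> 0 \<or> T2 \<noteq> 0" by auto
  moreover have "B1 * W x \<le> max B1 B2 * W x" "B2 * W x \<le> max B1 B2 * W x"
    by (intro mult_right_mono; simp)+
  ultimately show "W y \<le> max B1 B2 * W x"
  proof (elim disjE)
    assume "T1 \<noteq> 0" then have "W y \<le> B1 * W x" using a by blast
    then show ?thesis using \<open>B1 * W x \<le> max B1 B2 * W x\<close> by linarith
  next
    assume "T2 \<noteq> 0" then have "W y \<le> B2 * W x" using a by blast
    then show ?thesis using \<open>B2 * W x \<le> max B1 B2 * W x\<close> by linarith
  qed
qed

lemma ctrl_diff_le: "ctrl x y T1 Q1 B1 \<Longrightarrow> ctrl x y T2 Q2 B2 \<Longrightarrow> T = T1 - T2 \<Longrightarrow> Q1 + Q2 \<le> Q \<Longrightarrow> max B1 B2 \<le> B \<Longrightarrow> ctrl x y T Q B"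
  using ctrl_diff ctrl_mono by blast

(* (iii) for small increments, d(y,y') <= r y: the Lipschitz bound, transferred from y to x. *)
lemma K_diff_y_small:
  assumes d: "dist y y' \<le> r y"
  shows "ctrl x y (K x y - K x y') (kL * cr R2 * cW R2 * dist y y' / (r x * W x)) (cW R2)"
proof (cases "K x y - K x y' = 0")
  case True then show ?thesis by (intro ctrl_zero) (auto simp: kL_def)
next
  case False
  have L: "dist y x \<le> R2 * r y" using K_diff_y_near(2)[OF d False] by (simp add: dist_commute)
  have rx: "r x \<le> cr R2 * r y" by (rule cr(2)[OF L])
  have Wx: "W x \<le> cW R2 * W y" by (rule cW(2)[OF L])
  have Wy: "W y \<le> cW R2 * W x" by (rule cW(3)[OF L])
  have "r x * W x \<le> (cr R2 * r y) * (cW R2 * W y)" using rx Wx by (intro mult_mono) auto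
  then have "kL * dist y y' * (r x * W x) \<le> kL * dist y y' * ((cr R2 * r y) * (cW R2 * W y))"
    by (intro mult_left_mono) (auto simp: kL_def)
  then have "kL * dist y y' * (r x * W x) \<le> (kL * cr R2 * cW R2 * dist y y') * (r y * W y)"
    by (simp add: algebra_simps)
  then have "kL * dist y y' / (r y * W y) \<le> (kL * cr R2 * cW R2 * dist y y') / (r x * W x)"
    by (intro divide_le_divide_cross) auto
  then show ?thesis unfolding ctrl_def using K_diff_y_near(1)[OF d, of x] Wy by simp
qed

lemma K_value_ctrl:
  assumes "K x v \<noteq> 0 \<Longrightarrow> dist x y \<le> M * r x" and "K x v \<noteq> 0 \<Longrightarrow> r y \<le> D" and D0: "0 \<le> D"
  shows "ctrl x y (K x v) (kB * cr M * D / (r x * W x)) (cW M)"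
proof (cases "K x v = 0")
  case True then show ?thesis by (intro ctrl_zero) (use D0 in \<open>auto\<close>)
next
  case False
  have L: "dist x y \<le> M * r x" using assms(1)[OF False] .
  have rx: "r x \<le> cr M * r y" by (rule cr(3)[OF L])
  have Wy: "W y \<le> cW M * W x" by (rule cW(2)[OF L])
  have D: "r y \<le> D" using assms(2)[OF False] .
  have "r x \<le> cr M * D" using rx mult_left_mono[OF D cr_nn[of M]] by linarith
  then have "kB * r x \<le> kB * (cr M * D)" by (intro mult_left_mono) auto
  then have "kB * (r x * W x) \<le> (kB * cr M * D) * W x" by (simp add: algebra_simps)
  then have "kB / W x \<le> (kB * cr M * D) / (r x * W x)" by (intro divide_le_divide_cross) auto
  then show ?thesis unfolding ctrl_def using K_le_W_x[of x v] Wy by simp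
qed

(* (iii) for large increments, d(y,y') > r y: both values are bounded separately. *)
definition "M2 = 4 * c1 + C3"

lemma K_diff_y_large:
  assumes d: "r y < dist y y'" and c: "dist y y' \<le> (\<rho> x + dist x y) / 2"
  shows "ctrl x y (K x y - K x y') (kB * cr (2 * c1) * dist y y' / (r x * W x) + kB * cr M2 * dist y y' / (r x * W x)) (max (cW (2 * c1)) (cW M2))"
proof (rule ctrl_diff)
  show "ctrl x y (K x y) (kB * cr (2 * c1) * dist y y' / (r x * W x)) (cW (2 * c1))"
  proof (rule K_value_ctrl)
    assume "K x y \<noteq> 0"
    then show "dist x y \<le> 2 * c1 * r x" using K_support by fastforce
  next
    show "r y \<le> dist y y'" using d by simp
  qed simp
  show "ctrl x y (K x y') (kB * cr M2 * dist y y' / (r x * W x)) (cW M2)"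
  proof (rule K_value_ctrl)
    assume "K x y' \<noteq> 0"
    then have "dist x y' < 2 * c1 * r x" using K_support by blast
    moreover have "dist x y \<le> dist x y' + dist y y'" using dist_triangle[of x y y'] by (simp add: dist_commute)
    moreover have "\<rho> x \<le> C3 * r x" by (rule rho_le_r)
    ultimately show "dist x y \<le> M2 * r x" using c unfolding M2_def by (simp add: algebra_simps)
  next
    show "r y \<le> dist y y'" using d by simp
  qed simp
qed

definition "A3 = kL * cr R2 * cW R2 + kB * cr (2 * c1) + kB * cr M2"
definition "B3 = max (cW R2) (max (cW (2 * c1)) (cW M2))"

lemma K_diff_y_ctrl:
  assumes c: "dist y y' \<le> (\<rho> x + dist x y) / 2"
  shows "ctrl x y (K x y - K x y') (A3 * dist y y' / (r x * W x)) B3"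
proof (cases "dist y y' \<le> r y")
  case True
  show ?thesis
  proof (rule ctrl_mono[OF K_diff_y_small[OF True]])
    have "kL * cr R2 * cW R2 \<le> A3" unfolding A3_def by (simp add: kL_def)
    then show "kL * cr R2 * cW R2 * dist y y' / (r x * W x) \<le> A3 * dist y y' / (r x * W x)"
      by (intro divide_right_mono mult_right_mono) auto
    show "cW R2 \<le> B3" unfolding B3_def by simp
  qed
next
  case False
  then have d: "r y < dist y y'" by simp
  show ?thesis
  proof (rule ctrl_mono[OF K_diff_y_large[OF d c]])
    have "kB * cr (2 * c1) * dist y y' / (r x * W x) + kB * cr M2 * dist y y' / (r x * W x)
        = (kB * cr (2 * c1) + kB * cr M2) * dist y y' / (r x * W x)" by (simp add: field_simps)
    also have "\<dots> \<le> A3 * dist y y' / (r x * W x)"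
      unfolding A3_def by (intro divide_right_mono mult_right_mono) (auto simp: kL_def)
    finally show "kB * cr (2 * c1) * dist y y' / (r x * W x) + kB * cr M2 * dist y y' / (r x * W x)
        \<le> A3 * dist y y' / (r x * W x)" .
    show "max (cW (2 * c1)) (cW M2) \<le> B3" unfolding B3_def by auto
  qed
qed

definition "cE Q = 2 + C3 + 3 * Q * C3 * (1 + C3)"

(* The quantity E x y = rho(x)^theta (rho x + d(x,y))^(1-theta) from the admissibility
   inequality: it dominates rho x and, up to C3, rho y. *)
definition adm_E :: "'a \<Rightarrow> 'a \<Rightarrow> real" where
  "adm_E x y = \<rho> x powr theta * (\<rho> x + dist x y) powr (1 - theta)"

lemma rho_le_adm_E: "\<rho> x \<le> adm_E x y"
proof -
  have "\<rho> x = \<rho> x powr theta * \<rho> x powr (1 - theta)" by (simp add: powr_add[symmetric])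
  also have "\<dots> \<le> adm_E x y"
    unfolding adm_E_def using theta by (intro mult_left_mono powr_mono2) auto
  finally show ?thesis .
qed

lemma rho_shift_le_adm_E:
  assumes near: "3 * dist x x' \<le> \<rho> y + dist x y"
  shows "\<rho> x' \<le> C3 * (1 + C3) * adm_E x y"
proof -
  define P where "P = \<rho> x"
  define L where "L = dist x y"
  have P: "0 < P" and L: "0 \<le> L" unfolding P_def L_def by simp_all
  have "\<rho> y \<le> C3 * (P + L)" using rho_linear_growth[of y x] unfolding P_def L_def .
  moreover have "L \<le> C3 * (P + L)" using le_mult_ge1[OF C3_ge1, of "P + L"] P L by linarith
  moreover have "3 * dist x x' \<le> \<rho> y + L" using near unfolding L_def .
  moreover have "0 \<le> C3 * (P + L)" using C3_pos P L by simp
  ultimately have "dist x x' \<le> C3 * (P + L)" by linarith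
  then have Pd: "P + dist x x' \<le> (1 + C3) * (P + L)" using L by (simp add: algebra_simps)
  have pw: "(1 + C3) powr (1 - theta) \<le> 1 + C3"
    using powr_mono[of "1 - theta" 1 "1 + C3"] theta C3_ge1 by simp
  have "(P + dist x x') powr (1 - theta) \<le> ((1 + C3) * (P + L)) powr (1 - theta)"
    using Pd P theta by (intro powr_mono2) auto
  also have "\<dots> = (1 + C3) powr (1 - theta) * (P + L) powr (1 - theta)"
    using C3_ge1 P L by (simp add: powr_mult)
  also have "\<dots> \<le> (1 + C3) * (P + L) powr (1 - theta)"
    using pw by (intro mult_right_mono) auto
  finally have pd: "(P + dist x x') powr (1 - theta) \<le> (1 + C3) * (P + L) powr (1 - theta)" .
  have "\<rho> x' \<le> C3 * P powr theta * (P + dist x x') powr (1 - theta)"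
    using adm_theta[of x' x] unfolding P_def .
  also have "\<dots> \<le> C3 * P powr theta * ((1 + C3) * (P + L) powr (1 - theta))"
    using pd C3_pos by (intro mult_left_mono) auto
  also have "\<dots> = C3 * (1 + C3) * adm_E x y"
    unfolding adm_E_def P_def L_def by (simp add: algebra_simps)
  finally show ?thesis .
qed

(* If the increments are as in (iv) and d(x',y') <= Q rho x', then d(x,y) is also
   bounded by a multiple of rho x: adding up the triangle inequality gives
   rho x + d(x,y) <= cE Q * E x y, and the power of rho x + d(x,y) is absorbed. *)
lemma near_pair_far_bound:
  assumes c1': "dist x x' \<le> (\<rho> y + dist x y) / 3" and c2': "dist y y' \<le> (\<rho> x + dist x y) / 3"
    and f: "dist x' y' \<le> Q * \<rho> x'" and Q: "0 \<le> Q"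
  shows "dist x y \<le> cE Q powr (1/theta) * \<rho> x"
proof -
  define P where "P = \<rho> x"
  define L where "L = dist x y"
  define E where "E = adm_E x y"
  have P: "0 < P" and L: "0 \<le> L" unfolding P_def L_def by simp_all
  have c1'': "3 * dist x x' \<le> \<rho> y + dist x y" using c1' by simp
  have c2'': "3 * dist y y' \<le> \<rho> x + dist x y" using c2' by simp
  have ry: "\<rho> y \<le> C3 * E"
    using adm_theta[of y x] unfolding E_def adm_E_def by (simp add: mult.assoc)
  have rx': "\<rho> x' \<le> C3 * (1 + C3) * E" unfolding E_def by (rule rho_shift_le_adm_E[OF c1''])
  have tri: "dist x y \<le> dist x x' + dist x' y' + dist y y'"
    using dist_triangle[of x y x'] dist_triangle[of x' y y'] by (simp add: dist_commute)
  have "Q * \<rho> x' \<le> Q * (C3 * (1 + C3) * E)" using rx' Q by (intro mult_left_mono) auto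
  then have "L \<le> \<rho> y + 3 * (Q * (C3 * (1 + C3) * E)) + P"
    using tri c1'' c2'' f unfolding L_def P_def by linarith
  then have "P + L \<le> 2 * E + C3 * E + 3 * (Q * (C3 * (1 + C3) * E))"
    using ry rho_le_adm_E[of x y] unfolding P_def E_def by linarith
  also have "\<dots> = cE Q * E" unfolding cE_def by (simp add: algebra_simps)
  finally have "P + L \<le> cE Q * P powr theta * (P + L) powr (1 - theta)"
    unfolding E_def adm_E_def P_def L_def by (simp add: mult.assoc)
  moreover have "0 < cE Q" unfolding cE_def using C3_ge1 Q by (intro add_pos_nonneg) auto
  ultimately have "P + L \<le> cE Q powr (1/theta) * P" using P L by (intro absorb_theta) auto
  then show ?thesis unfolding P_def L_def using rho_pos[of x] by linarith
qed

(* The five estimates for (iv), according to whether d(x,x') and d(y,y') are below the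
   scales r x and r y.  Each shows that a non-vanishing term forces d(x,y) to be a bounded
   multiple of the scale, so r and W are comparable at x and y, and then converts the
   available Lipschitz or size bound into the form C d(x,x') d(y,y') / (r x^2 W x). *)
definition "M4 = C3 + 2 * R2"
definition "M5 = C3 + 3 * c1"
definition "M6 = cE (2 * c1) powr (1/theta) * C3"
definition "M7 = 2 * M6 + C3"

lemma C3_nn[simp]: "0 \<le> C3" using C3_ge1 by linarith
lemma R2_nn[simp]: "0 \<le> R2" unfolding R2_def by simp
lemma M6_nn[simp]: "0 \<le> M6" unfolding M6_def by simp

lemma mixed_small_small:
  assumes dx: "dist x x' \<le> r x" and dy: "dist y y' \<le> r y"
  shows "ctrl x y ((K x y - K x y') - (K x' y - K x' y'))
           (kM * cr R3 * cW R3 * dist x x' * dist y y' / (r x * r x * W x)) (cW R3)"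
proof (cases "K x y - K x y' - K x' y + K x' y' = 0")
  case True then show ?thesis by (intro ctrl_zero) auto
next
  case False
  have L: "dist y x \<le> R3 * r y" using K_mixed_near(2)[OF dx dy False] by (simp add: dist_commute)
  have rx: "r x \<le> cr R3 * r y" by (rule cr(2)[OF L])
  have Wx: "W x \<le> cW R3 * W y" by (rule cW(2)[OF L])
  have Wy: "W y \<le> cW R3 * W x" by (rule cW(3)[OF L])
  have "r x * W x \<le> (cr R3 * r y) * (cW R3 * W y)" using rx Wx by (intro mult_mono) auto
  then have "(kM * dist x x' * dist y y' * r x) * (r x * W x)
      \<le> (kM * dist x x' * dist y y' * r x) * ((cr R3 * r y) * (cW R3 * W y))"
    by (intro mult_left_mono) auto
  then have "kM * dist x x' * dist y y' * (r x * r x * W x) \<le> (kM * cr R3 * cW R3 * dist x x' * dist y y') * (r x * r y * W y)"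
    by (simp add: algebra_simps)
  then have "kM * dist x x' * dist y y' / (r x * r y * W y) \<le> (kM * cr R3 * cW R3 * dist x x' * dist y y') / (r x * r x * W x)"
    by (intro divide_le_divide_cross) auto
  moreover have "(K x y - K x y') - (K x' y - K x' y') = K x y - K x y' - K x' y + K x' y'" by simp
  ultimately show ?thesis unfolding ctrl_def using K_mixed_near(1)[OF dx dy] Wy by auto
qed

lemma mixed_large_small:
  assumes r1: "r x \<le> dist x x'" and dy: "dist y y' \<le> r y" and c1': "3 * dist x x' \<le> \<rho> y + dist x y"
  shows "ctrl x y (K x' y - K x' y') (kL * cr M4 * cW M4 * dist x x' * dist y y' / (r x * r x * W x)) (cW M4)"
proof (cases "K x' y - K x' y' = 0")
  case True then show ?thesis by (intro ctrl_zero) auto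
next
  case False
  have d: "dist x' y < R2 * r y" by (rule K_diff_y_near(2)[OF dy False])
  have tri: "dist x y \<le> dist x x' + dist x' y" by (rule dist_triangle)
  have "\<rho> y \<le> C3 * r y" by (rule rho_le_r)
  then have "2 * dist x y \<le> C3 * r y + 3 * (R2 * r y)" using d tri c1' by linarith
  moreover have "C3 * r y + 3 * (R2 * r y) \<le> 2 * (M4 * r y)"
    unfolding M4_def using R2_nn C3_nn by (simp add: algebra_simps mult_nonneg_nonneg)
  ultimately have L: "dist y x \<le> M4 * r y" by (simp add: dist_commute)
  have rx: "r x \<le> cr M4 * r y" by (rule cr(2)[OF L])
  have Wx: "W x \<le> cW M4 * W y" by (rule cW(2)[OF L])
  have Wy: "W y \<le> cW M4 * W x" by (rule cW(3)[OF L])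
  have "r x * W x \<le> (cr M4 * r y) * (cW M4 * W y)" using rx Wx by (intro mult_mono) auto
  then have "r x * (r x * W x) \<le> dist x x' * ((cr M4 * r y) * (cW M4 * W y))"
    by (rule mult_mono[OF r1]) auto
  then have "(kL * dist y y') * (r x * (r x * W x)) \<le> (kL * dist y y') * (dist x x' * ((cr M4 * r y) * (cW M4 * W y)))"
    by (intro mult_left_mono) auto
  then have "kL * dist y y' * (r x * r x * W x) \<le> (kL * cr M4 * cW M4 * dist x x' * dist y y') * (r y * W y)"
    by (simp add: algebra_simps)
  then have "kL * dist y y' / (r y * W y) \<le> (kL * cr M4 * cW M4 * dist x x' * dist y y') / (r x * r x * W x)"
    by (intro divide_le_divide_cross) auto
  then show ?thesis unfolding ctrl_def using K_diff_y_near(1)[OF dy, of x'] Wy by auto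
qed

lemma mixed_large_large_1:
  assumes r1: "r x \<le> dist x x'" and r2: "r y \<le> dist y y'" and c1': "3 * dist x x' \<le> \<rho> y + dist x y"
  shows "ctrl x y (K x' y) (kB * cr M5 * cW M5 * dist x x' * dist y y' / (r x * r x * W x)) (cW M5)"
proof (cases "K x' y = 0")
  case True then show ?thesis by (intro ctrl_zero) auto
next
  case False
  have d: "dist x' y < 2 * c1 * r y" using K_support[OF False] by blast
  have tri: "dist x y \<le> dist x x' + dist x' y" by (rule dist_triangle)
  have "\<rho> y \<le> C3 * r y" by (rule rho_le_r)
  then have "2 * dist x y \<le> C3 * r y + 3 * (2 * c1 * r y)" using d tri c1' by linarith
  moreover have "C3 * r y + 3 * (2 * c1 * r y) \<le> 2 * (M5 * r y)"
    unfolding M5_def by (simp add: algebra_simps mult_nonneg_nonneg)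
  ultimately have L: "dist y x \<le> M5 * r y" by (simp add: dist_commute)
  have rx: "r x \<le> cr M5 * r y" by (rule cr(2)[OF L])
  have Wx: "W x \<le> cW M5 * W y" by (rule cW(2)[OF L])
  have Wy: "W y \<le> cW M5 * W x" by (rule cW(3)[OF L])
  have "r x \<le> cr M5 * dist y y'" using rx mult_left_mono[OF r2 cr_nn[of M5]] by linarith
  then have "r x * W x \<le> (cr M5 * dist y y') * (cW M5 * W y)" using Wx by (intro mult_mono) auto
  then have "r x * (r x * W x) \<le> dist x x' * ((cr M5 * dist y y') * (cW M5 * W y))"
    by (rule mult_mono[OF r1]) auto
  then have "kB * (r x * (r x * W x)) \<le> kB * (dist x x' * ((cr M5 * dist y y') * (cW M5 * W y)))"
    by (intro mult_left_mono) auto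
  then have "kB * (r x * r x * W x) \<le> (kB * cr M5 * cW M5 * dist x x' * dist y y') * W y"
    by (simp add: algebra_simps)
  then have "kB / W y \<le> (kB * cr M5 * cW M5 * dist x x' * dist y y') / (r x * r x * W x)"
    by (intro divide_le_divide_cross) auto
  then show ?thesis unfolding ctrl_def using K_le_W_y[of x' y] Wy by auto
qed

lemma mixed_large_large_2:
  assumes r1: "r x \<le> dist x x'" and r2: "r y \<le> dist y y'"
    and c1': "dist x x' \<le> (\<rho> y + dist x y) / 3" and c2': "dist y y' \<le> (\<rho> x + dist x y) / 3"
  shows "ctrl x y (K x' y') (kB * cW M7 * cr M6 * dist x x' * dist y y' / (r x * r x * W x)) (cW M6)"
proof (cases "K x' y' = 0")
  case True then show ?thesis by (intro ctrl_zero) auto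
next
  case False
  have "dist x' y' < 2 * c1 * r x'" using K_support[OF False] by blast
  moreover have "2 * c1 * r x' \<le> 2 * c1 * \<rho> x'" using r_le_rho[of x'] by (intro mult_left_mono) auto
  ultimately have f: "dist x' y' \<le> (2 * c1) * \<rho> x'" by linarith
  have "dist x y \<le> cE (2 * c1) powr (1/theta) * \<rho> x" by (rule near_pair_far_bound[OF c1' c2' f]) simp
  also have "\<dots> \<le> cE (2 * c1) powr (1/theta) * (C3 * r x)" using rho_le_r[of x] by (intro mult_left_mono) auto
  finally have L: "dist x y \<le> M6 * r x" unfolding M6_def by (simp add: mult.assoc)
  have c2'': "3 * dist y y' \<le> \<rho> x + dist x y" using c2' by simp
  have tri: "dist x y' \<le> dist x y + dist y y'" by (rule dist_triangle)
  have "\<rho> x \<le> C3 * r x" by (rule rho_le_r)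
  then have "3 * dist x y' \<le> 4 * (M6 * r x) + C3 * r x" using L tri c2'' by linarith
  moreover have "4 * (M6 * r x) + C3 * r x \<le> 3 * (M7 * r x)"
    unfolding M7_def by (simp add: algebra_simps mult_nonneg_nonneg)
  ultimately have L7: "dist x y' \<le> M7 * r x" by simp
  have Wx: "W x \<le> cW M7 * W y'" by (rule cW(3)[OF L7])
  have Wy: "W y \<le> cW M6 * W x" by (rule cW(2)[OF L])
  have rx: "r x \<le> cr M6 * r y" by (rule cr(3)[OF L])
  have "r x \<le> cr M6 * dist y y'" using rx mult_left_mono[OF r2 cr_nn[of M6]] by linarith
  then have "r x * W x \<le> (cr M6 * dist y y') * (cW M7 * W y')" using Wx by (intro mult_mono) auto
  then have "r x * (r x * W x) \<le> dist x x' * ((cr M6 * dist y y') * (cW M7 * W y'))"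
    by (rule mult_mono[OF r1]) auto
  then have "kB * (r x * (r x * W x)) \<le> kB * (dist x x' * ((cr M6 * dist y y') * (cW M7 * W y')))"
    by (intro mult_left_mono) auto
  then have "kB * (r x * r x * W x) \<le> (kB * cW M7 * cr M6 * dist x x' * dist y y') * W y'"
    by (simp add: algebra_simps)
  then have "kB / W y' \<le> (kB * cW M7 * cr M6 * dist x x' * dist y y') / (r x * r x * W x)"
    by (intro divide_le_divide_cross) auto
  then show ?thesis unfolding ctrl_def using K_le_W_y[of x' y'] Wy by auto
qed

lemma mixed_small_large_1:
  assumes dx: "dist x x' \<le> r x" and r2: "r y \<le> dist y y'"
  shows "ctrl x y (K x y - K x' y) (kL * cr R2 * dist x x' * dist y y' / (r x * r x * W x)) (cW R2)"
proof (cases "K x y - K x' y = 0")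
  case True then show ?thesis by (intro ctrl_zero) auto
next
  case False
  have eq: "K x y - K x' y = K y x - K y x'" using K_sym by simp
  have "dist y x < R2 * r x" using K_diff_y_near(2)[OF dx, of y] False eq by simp
  then have L: "dist x y \<le> R2 * r x" by (simp add: dist_commute)
  have Wy: "W y \<le> cW R2 * W x" by (rule cW(2)[OF L])
  have rx: "r x \<le> cr R2 * r y" by (rule cr(3)[OF L])
  have "r x \<le> cr R2 * dist y y'" using rx mult_left_mono[OF r2 cr_nn[of R2]] by linarith
  then have "(kL * dist x x' * (r x * W x)) * r x \<le> (kL * dist x x' * (r x * W x)) * (cr R2 * dist y y')"
    by (intro mult_left_mono) auto
  then have "kL * dist x x' * (r x * r x * W x) \<le> (kL * cr R2 * dist x x' * dist y y') * (r x * W x)"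
    by (simp add: algebra_simps)
  then have "kL * dist x x' / (r x * W x) \<le> (kL * cr R2 * dist x x' * dist y y') / (r x * r x * W x)"
    by (intro divide_le_divide_cross) auto
  then show ?thesis unfolding ctrl_def using K_diff_y_near(1)[OF dx, of y] Wy eq by auto
qed

lemma mixed_small_large_2:
  assumes dx: "dist x x' \<le> r x" and r2: "r y \<le> dist y y'" and c2': "3 * dist y y' \<le> \<rho> x + dist x y"
  shows "ctrl x y (K x y' - K x' y') (kL * cr M4 * dist x x' * dist y y' / (r x * r x * W x)) (cW M4)"
proof (cases "K x y' - K x' y' = 0")
  case True then show ?thesis by (intro ctrl_zero) auto
next
  case False
  have eq: "K x y' - K x' y' = K y' x - K y' x'" using K_sym by simp
  have d: "dist y' x < R2 * r x" using K_diff_y_near(2)[OF dx, of y'] False eq by simp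
  have tri: "dist x y \<le> dist x y' + dist y y'" using dist_triangle[of x y y'] by (simp add: dist_commute)
  have "\<rho> x \<le> C3 * r x" by (rule rho_le_r)
  moreover have d': "dist x y' < R2 * r x" using d by (simp add: dist_commute)
  ultimately have "2 * dist x y \<le> 3 * (R2 * r x) + C3 * r x" using tri c2' by linarith
  moreover have "3 * (R2 * r x) + C3 * r x \<le> 2 * (M4 * r x)"
    unfolding M4_def by (simp add: algebra_simps mult_nonneg_nonneg)
  ultimately have L: "dist x y \<le> M4 * r x" by simp
  have Wy: "W y \<le> cW M4 * W x" by (rule cW(2)[OF L])
  have rx: "r x \<le> cr M4 * r y" by (rule cr(3)[OF L])
  have "r x \<le> cr M4 * dist y y'" using rx mult_left_mono[OF r2 cr_nn[of M4]] by linarith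
  then have "(kL * dist x x' * (r x * W x)) * r x \<le> (kL * dist x x' * (r x * W x)) * (cr M4 * dist y y')"
    by (intro mult_left_mono) auto
  then have "kL * dist x x' * (r x * r x * W x) \<le> (kL * cr M4 * dist x x' * dist y y') * (r x * W x)"
    by (simp add: algebra_simps)
  then have "kL * dist x x' / (r x * W x) \<le> (kL * cr M4 * dist x x' * dist y y') / (r x * r x * W x)"
    by (intro divide_le_divide_cross) auto
  then show ?thesis unfolding ctrl_def using K_diff_y_near(1)[OF dx, of y'] Wy eq by auto
qed

definition "A4 = kM * cr R3 * cW R3 + A3 + kL * cr M4 * cW M4 + kB * cr M5 * cW M5 + kB * cW M7 * cr M6
   + kL * cr R2 + kL * cr M4"
definition "B4 = max (cW R3) (max B3 (max (cW M4) (max (cW M5) (max (cW M6) (cW R2)))))"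

lemma A3_nn[simp]: "0 \<le> A3" unfolding A3_def by simp

(* Property (iv) in the (r, W) form when the increment in x is below the scale:
   either both increments are small (mixed Lipschitz bound), or the y-increment is
   large and the difference is regrouped as two x-differences. *)
lemma K_mixed_ctrl_small_x:
  assumes dx: "dist x x' \<le> r x" and c2: "3 * dist y y' \<le> \<rho> x + dist x y"
  shows "ctrl x y ((K x y - K x y') - (K x' y - K x' y')) (A4 * dist x x' * dist y y' / (r x * r x * W x)) B4"
proof -
  define X where "X = dist x x' * dist y y' / (r x * r x * W x)"
  have X: "0 \<le> X" unfolding X_def by simp
  have Aeq: "c * dist x x' * dist y y' / (r x * r x * W x) = c * X" for c unfolding X_def by simp
  show ?thesis unfolding Aeq
  proof (cases "dist y y' \<le> r y")
    case dy: True
    show "ctrl x y ((K x y - K x y') - (K x' y - K x' y')) (A4 * X) B4"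
    proof (rule ctrl_mono[OF mixed_small_small[OF dx dy], unfolded Aeq])
      show "kM * cr R3 * cW R3 * X \<le> A4 * X" unfolding A4_def using X by (intro mult_right_mono) auto
      show "cW R3 \<le> B4" unfolding B4_def by simp
    qed
  next
    case False
    then have r2: "r y \<le> dist y y'" by simp
    show "ctrl x y ((K x y - K x y') - (K x' y - K x' y')) (A4 * X) B4"
    proof (rule ctrl_diff_le[OF mixed_small_large_1[OF dx r2] mixed_small_large_2[OF dx r2 c2], unfolded Aeq])
      have "kL * cr R2 * X + kL * cr M4 * X = (kL * cr R2 + kL * cr M4) * X" by (simp add: algebra_simps)
      also have "\<dots> \<le> A4 * X" unfolding A4_def using X by (intro mult_right_mono) auto
      finally show "kL * cr R2 * X + kL * cr M4 * X \<le> A4 * X" .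
      show "max (cW R2) (cW M4) \<le> B4" unfolding B4_def by auto
    qed simp
  qed
qed

(* Property (iv) in the (r, W) form when the increment in x exceeds the scale: the
   y-difference at x is bounded by (iii), and the y-difference at x' either by the
   Lipschitz bound (small y-increment) or by two size bounds (large y-increment). *)
lemma K_mixed_ctrl_large_x:
  assumes r1: "r x \<le> dist x x'"
    and c1: "dist x x' \<le> (\<rho> y + dist x y) / 3" and c2: "dist y y' \<le> (\<rho> x + dist x y) / 3"
  shows "ctrl x y ((K x y - K x y') - (K x' y - K x' y')) (A4 * dist x x' * dist y y' / (r x * r x * W x)) B4"
proof -
  define X where "X = dist x x' * dist y y' / (r x * r x * W x)"
  have X: "0 \<le> X" unfolding X_def by simp
  have Aeq: "c * dist x x' * dist y y' / (r x * r x * W x) = c * X" for c unfolding X_def by simp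
  have c1': "3 * dist x x' \<le> \<rho> y + dist x y" using c1 by simp
  have "dist y y' \<le> (\<rho> x + dist x y) / 2" using c2 zero_le_dist[of y y'] by linarith
  then have T1: "ctrl x y (K x y - K x y') (A3 * X) B3"
  proof (rule ctrl_mono[OF K_diff_y_ctrl])
    have "A3 * dist y y' * (r x * r x * W x) \<le> A3 * dist y y' * (dist x x' * (r x * W x))"
      using r1 by (intro mult_left_mono mult_right_mono) auto
    then have "A3 * dist y y' * (r x * r x * W x) \<le> (A3 * dist x x' * dist y y') * (r x * W x)"
      by (simp add: algebra_simps)
    then have "A3 * dist y y' / (r x * W x) \<le> (A3 * dist x x' * dist y y') / (r x * r x * W x)"
      by (intro divide_le_divide_cross) auto
    then show "A3 * dist y y' / (r x * W x) \<le> A3 * X" unfolding X_def by simp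
  qed simp
  show ?thesis unfolding Aeq
  proof (cases "dist y y' \<le> r y")
    case dy: True
    show "ctrl x y ((K x y - K x y') - (K x' y - K x' y')) (A4 * X) B4"
    proof (rule ctrl_diff_le[OF T1 mixed_large_small[OF r1 dy c1'], unfolded Aeq])
      have "A3 * X + kL * cr M4 * cW M4 * X = (A3 + kL * cr M4 * cW M4) * X" by (simp add: algebra_simps)
      also have "\<dots> \<le> A4 * X" unfolding A4_def using X by (intro mult_right_mono) auto
      finally show "A3 * X + kL * cr M4 * cW M4 * X \<le> A4 * X" .
      show "max B3 (cW M4) \<le> B4" unfolding B4_def by auto
    qed simp
  next
    case False
    then have r2: "r y \<le> dist y y'" by simp
    have T2: "ctrl x y (K x' y - K x' y') (kB * cr M5 * cW M5 * X + kB * cW M7 * cr M6 * X) (max (cW M5) (cW M6))"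
      using ctrl_diff[OF mixed_large_large_1[OF r1 r2 c1'] mixed_large_large_2[OF r1 r2 c1 c2]]
      unfolding Aeq .
    show "ctrl x y ((K x y - K x y') - (K x' y - K x' y')) (A4 * X) B4"
    proof (rule ctrl_diff_le[OF T1 T2])
      have "A3 * X + (kB * cr M5 * cW M5 * X + kB * cW M7 * cr M6 * X)
          = (A3 + kB * cr M5 * cW M5 + kB * cW M7 * cr M6) * X" by (simp add: algebra_simps)
      also have "\<dots> \<le> A4 * X" unfolding A4_def using X by (intro mult_right_mono) auto
      finally show "A3 * X + (kB * cr M5 * cW M5 * X + kB * cW M7 * cr M6 * X) \<le> A4 * X" .
      show "max B3 (max (cW M5) (cW M6)) \<le> B4" unfolding B4_def by auto
    qed simp
  qed
qed

lemma K_mixed_ctrl: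
  assumes c1: "dist x x' \<le> (\<rho> y + dist x y) / 3" and c2: "dist y y' \<le> (\<rho> x + dist x y) / 3"
  shows "ctrl x y ((K x y - K x y') - (K x' y - K x' y')) (A4 * dist x x' * dist y y' / (r x * r x * W x)) B4"
proof (cases "dist x x' \<le> r x")
  case True
  moreover have "3 * dist y y' \<le> \<rho> x + dist x y" using c2 by simp
  ultimately show ?thesis by (rule K_mixed_ctrl_small_x)
next
  case False
  then show ?thesis using K_mixed_ctrl_large_x[OF _ c1 c2] by simp
qed

definition "cVW = (SOME c. c \<ge> 1 \<and> (\<forall>x. W x \<le> V \<mu> (\<rho> x) x \<and> V \<mu> (\<rho> x) x \<le> c * W x))"

lemma cVW: "cVW \<ge> 1" "W x \<le> V \<mu> (\<rho> x) x" "V \<mu> (\<rho> x) x \<le> cVW * W x"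
  using someI_ex[OF V_W_comparable] unfolding cVW_def[symmetric] by auto

lemma V_pos: "0 < V \<mu> (\<rho> x) x" using cVW(2)[of x] W_pos[of x] by linarith

lemma V_sum_bound: "W y \<le> B * W x \<Longrightarrow> V \<mu> (\<rho> x) x + V \<mu> (\<rho> y) y \<le> cVW * (1 + B) * W x"
proof -
  assume h: "W y \<le> B * W x"
  have "cVW * W y \<le> cVW * (B * W x)" using h cVW(1) by (intro mult_left_mono) auto
  then show ?thesis using cVW(3)[of x] cVW(3)[of y] by (simp add: algebra_simps)
qed

lemma ctrl_to_V:
  assumes g: "ctrl x y T (A * D / (r x * W x)) B" and A: "0 \<le> A" and B: "0 \<le> B" and D: "0 \<le> D"
  shows "\<bar>T\<bar> \<le> (A * C3 * cVW * (1 + B)) * (D / \<rho> x) * (1 / (V \<mu> (\<rho> x) x + V \<mu> (\<rho> y) y))"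
proof (cases "T = 0")
  case True
  have "0 \<le> (A * C3 * cVW * (1 + B)) * (D / \<rho> x) * (1 / (V \<mu> (\<rho> x) x + V \<mu> (\<rho> y) y))"
    using A B D cVW(1) V_pos[of x] V_pos[of y] by (intro mult_nonneg_nonneg divide_nonneg_nonneg add_nonneg_nonneg) (auto intro: less_imp_le)
  then show ?thesis using True by simp
next
  case False
  have Wy: "W y \<le> B * W x" and T: "\<bar>T\<bar> \<le> A * D / (r x * W x)" using g False unfolding ctrl_def by auto
  have vs: "V \<mu> (\<rho> x) x + V \<mu> (\<rho> y) y \<le> cVW * (1 + B) * W x" by (rule V_sum_bound[OF Wy])
  have "\<rho> x * (V \<mu> (\<rho> x) x + V \<mu> (\<rho> y) y) \<le> (C3 * r x) * (cVW * (1 + B) * W x)"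
    using rho_le_r[of x] vs V_pos[of x] V_pos[of y] by (intro mult_mono) auto
  then have "(A * D) * (\<rho> x * (V \<mu> (\<rho> x) x + V \<mu> (\<rho> y) y)) \<le> (A * D) * ((C3 * r x) * (cVW * (1 + B) * W x))"
    using A D by (intro mult_left_mono) auto
  then have "A * D * (\<rho> x * (V \<mu> (\<rho> x) x + V \<mu> (\<rho> y) y)) \<le> (A * C3 * cVW * (1 + B) * D) * (r x * W x)"
    by (simp add: algebra_simps)
  then have "A * D / (r x * W x) \<le> (A * C3 * cVW * (1 + B) * D) / (\<rho> x * (V \<mu> (\<rho> x) x + V \<mu> (\<rho> y) y))"
    using V_pos[of x] V_pos[of y] by (intro divide_le_divide_cross) auto
  then show ?thesis using T by simp
qed

lemma ctrl_to_V2: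
  assumes g: "ctrl x y T (A * D1 * D2 / (r x * r x * W x)) B" and A: "0 \<le> A" and B: "0 \<le> B" and D: "0 \<le> D1" "0 \<le> D2"
  shows "\<bar>T\<bar> \<le> (A * C3 * C3 * cVW * (1 + B)) * (D1 / \<rho> x) * (D2 / \<rho> x) * (1 / (V \<mu> (\<rho> x) x + V \<mu> (\<rho> y) y))"
proof (cases "T = 0")
  case True
  have "0 \<le> (A * C3 * C3 * cVW * (1 + B)) * (D1 / \<rho> x) * (D2 / \<rho> x) * (1 / (V \<mu> (\<rho> x) x + V \<mu> (\<rho> y) y))"
    using A B D cVW(1) V_pos[of x] V_pos[of y] by (intro mult_nonneg_nonneg divide_nonneg_nonneg add_nonneg_nonneg) (auto intro: less_imp_le)
  then show ?thesis using True by simp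
next
  case False
  have Wy: "W y \<le> B * W x" and T: "\<bar>T\<bar> \<le> A * D1 * D2 / (r x * r x * W x)" using g False unfolding ctrl_def by auto
  have vs: "V \<mu> (\<rho> x) x + V \<mu> (\<rho> y) y \<le> cVW * (1 + B) * W x" by (rule V_sum_bound[OF Wy])
  have rr: "\<rho> x * \<rho> x \<le> (C3 * r x) * (C3 * r x)"
    using rho_le_r[of x] by (intro mult_mono) auto
  have "(\<rho> x * \<rho> x) * (V \<mu> (\<rho> x) x + V \<mu> (\<rho> y) y) \<le> ((C3 * r x) * (C3 * r x)) * (cVW * (1 + B) * W x)"
    using V_pos[of x] V_pos[of y] by (intro mult_mono[OF rr vs]) (auto intro: less_imp_le)
  then have "(A * D1 * D2) * ((\<rho> x * \<rho> x) * (V \<mu> (\<rho> x) x + V \<mu> (\<rho> y) y)) \<le> (A * D1 * D2) * (((C3 * r x) * (C3 * r x)) * (cVW * (1 + B) * W x))"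
    using A D by (intro mult_left_mono) auto
  then have "A * D1 * D2 * (\<rho> x * \<rho> x * (V \<mu> (\<rho> x) x + V \<mu> (\<rho> y) y)) \<le> (A * C3 * C3 * cVW * (1 + B) * D1 * D2) * (r x * r x * W x)"
    by (simp add: algebra_simps)
  then have "A * D1 * D2 / (r x * r x * W x) \<le> (A * C3 * C3 * cVW * (1 + B) * D1 * D2) / (\<rho> x * \<rho> x * (V \<mu> (\<rho> x) x + V \<mu> (\<rho> y) y))"
    using V_pos[of x] V_pos[of y] by (intro divide_le_divide_cross) auto
  then show ?thesis using T by simp
qed

lemma B3_nn[simp]: "0 \<le> B3" unfolding B3_def by (simp add: le_max_iff_disj)
lemma B4_nn[simp]: "0 \<le> B4" unfolding B4_def by (simp add: le_max_iff_disj)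
lemma A4_nn[simp]: "0 \<le> A4" unfolding A4_def by simp

definition "Ciii = A3 * C3 * cVW * (1 + B3)"
definition "Civ = A4 * C3 * C3 * cVW * (1 + B4)"
definition "Cb = 2 * kB * cVW"
definition "CK = max (2 * c1) (max Cb (max Ciii Civ))"

lemma CK_pos: "0 < CK"
  unfolding CK_def by (simp add: less_max_iff_disj)

lemma CK_ge: "2 * c1 \<le> CK" "Cb \<le> CK" "Ciii \<le> CK" "Civ \<le> CK"
  unfolding CK_def by auto

lemma inv_V_sum_nonneg: "0 \<le> 1 / (V \<mu> (\<rho> x) x + V \<mu> (\<rho> y) y)"
  using V_pos[of x] V_pos[of y] by simp

lemma K_vanishes_far:
  assumes far: "dist x y > CK * min (\<rho> x) (\<rho> y)"
  shows "K x y = 0"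
proof (rule ccontr)
  assume "K x y \<noteq> 0"
  then have "dist x y < 2 * c1 * r x" "dist x y < 2 * c1 * r y" using K_support by auto
  moreover have "2 * c1 * r x \<le> 2 * c1 * \<rho> x" "2 * c1 * r y \<le> 2 * c1 * \<rho> y"
    using r_le_rho by (intro mult_left_mono; simp)+
  moreover have "2 * c1 * min (\<rho> x) (\<rho> y) = min (2 * c1 * \<rho> x) (2 * c1 * \<rho> y)"
    by (simp add: min_mult_distrib_left)
  moreover have "2 * c1 * min (\<rho> x) (\<rho> y) \<le> CK * min (\<rho> x) (\<rho> y)"
    using CK_ge(1) by (intro mult_right_mono) auto
  ultimately show False using far by linarith
qed

(* Property (i), size: K x y W x and K x y W y are bounded, and V is comparable to W. *)
lemma K_le_V: "K x y \<le> CK * (1 / (V \<mu> (\<rho> x) x + V \<mu> (\<rho> y) y))"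
proof -
  have "K x y * W x \<le> kB" using K_le_W_x[of x y] by (simp add: field_simps)
  moreover have "K x y * W y \<le> kB" using K_le_W_y[of x y] by (simp add: field_simps)
  ultimately have KW: "K x y * (W x + W y) \<le> 2 * kB" by (simp add: algebra_simps)
  have "V \<mu> (\<rho> x) x + V \<mu> (\<rho> y) y \<le> cVW * (W x + W y)"
    using cVW(3)[of x] cVW(3)[of y] by (simp add: algebra_simps)
  then have "K x y * (V \<mu> (\<rho> x) x + V \<mu> (\<rho> y) y) \<le> K x y * (cVW * (W x + W y))"
    by (intro mult_left_mono) auto
  also have "\<dots> = cVW * (K x y * (W x + W y))" by simp
  also have "\<dots> \<le> cVW * (2 * kB)" using KW cVW(1) by (intro mult_left_mono) auto
  also have "\<dots> \<le> CK" using CK_ge(2) unfolding Cb_def by (simp add: mult.commute mult.left_commute)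
  finally show ?thesis using V_pos[of x] V_pos[of y] by (simp add: field_simps)
qed

lemma K_diff_y_V:
  assumes "dist y y' \<le> (\<rho> x + dist x y) / 2"
  shows "\<bar>K x y - K x y'\<bar> \<le> CK * (dist y y' / \<rho> x) * (1 / (V \<mu> (\<rho> x) x + V \<mu> (\<rho> y) y))"
proof -
  have "\<bar>K x y - K x y'\<bar> \<le> Ciii * (dist y y' / \<rho> x) * (1 / (V \<mu> (\<rho> x) x + V \<mu> (\<rho> y) y))"
    unfolding Ciii_def by (rule ctrl_to_V[OF K_diff_y_ctrl[OF assms]]) auto
  also have "\<dots> \<le> CK * (dist y y' / \<rho> x) * (1 / (V \<mu> (\<rho> x) x + V \<mu> (\<rho> y) y))"
    using CK_ge(3) inv_V_sum_nonneg by (intro mult_right_mono) auto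
  finally show ?thesis .
qed

lemma K_mixed_V:
  assumes "dist x x' \<le> (\<rho> y + dist x y) / 3" and "dist y y' \<le> (\<rho> x + dist x y) / 3"
  shows "\<bar>(K x y - K x y') - (K x' y - K x' y')\<bar>
    \<le> CK * (dist x x' / \<rho> x) * (dist y y' / \<rho> x) * (1 / (V \<mu> (\<rho> x) x + V \<mu> (\<rho> y) y))"
proof -
  have "\<bar>(K x y - K x y') - (K x' y - K x' y')\<bar>
      \<le> Civ * (dist x x' / \<rho> x) * (dist y y' / \<rho> x) * (1 / (V \<mu> (\<rho> x) x + V \<mu> (\<rho> y) y))"
    unfolding Civ_def by (rule ctrl_to_V2[OF K_mixed_ctrl[OF assms]]) auto
  also have "\<dots> \<le> CK * (dist x x' / \<rho> x) * (dist y y' / \<rho> x) * (1 / (V \<mu> (\<rho> x) x + V \<mu> (\<rho> y) y))"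
    using CK_ge(4) inv_V_sum_nonneg by (intro mult_right_mono) auto
  finally show ?thesis .
qed

end

theorem proposition3p1:
  fixes \<mu> :: "'a::metric_space measure" and \<rho> :: "'a \<Rightarrow> real"
  assumes "RD_space \<mu>" and "admissible \<rho>"
  shows "\<exists>K :: 'a \<Rightarrow> 'a \<Rightarrow> real. \<exists>C > 0.
    (\<forall>x y. 0 \<le> K x y) \<and>
    (\<forall>x y. dist x y > C * min (\<rho> x) (\<rho> y) \<longrightarrow> K x y = 0) \<and>
    (\<forall>x y. K x y \<le> C * (1 / (V \<mu> (\<rho> x) x + V \<mu> (\<rho> y) y))) \<and>
    (\<forall>x y. K x y = K y x) \<and>
    (\<forall>x y y'. dist y y' \<le> (\<rho> x + dist x y) / 2 \<longrightarrow>
       \<bar>K x y - K x y'\<bar> \<le> C * (dist y y' / \<rho> x) * (1 / (V \<mu> (\<rho> x) x + V \<mu> (\<rho> y) y))) \<and>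
    (\<forall>x x' y y'. dist x x' \<le> (\<rho> y + dist x y) / 3 \<and> dist y y' \<le> (\<rho> x + dist x y) / 3 \<longrightarrow>
       \<bar>(K x y - K x y') - (K x' y - K x' y')\<bar>
         \<le> C * (dist x x' / \<rho> x) * (dist y y' / \<rho> x) * (1 / (V \<mu> (\<rho> x) x + V \<mu> (\<rho> y) y))) \<and>
    (\<forall>y. (\<lambda>x. K x y) \<in> borel_measurable \<mu> \<and> (\<integral>\<^sup>+ x. ennreal (K x y) \<partial>\<mu>) = 1)"
proof -
  interpret admissible_scale \<mu> \<rho>
    by (intro admissible_scale.intro admissible_scale_axioms.intro RD_space_doubling assms)
  have mixed: "\<forall>x x' y y'. dist x x' \<le> (\<rho> y + dist x y) / 3 \<and> dist y y' \<le> (\<rho> x + dist x y) / 3 \<longrightarrow>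
      \<bar>(K x y - K x y') - (K x' y - K x' y')\<bar>
        \<le> CK * (dist x x' / \<rho> x) * (dist y y' / \<rho> x) * (1 / (V \<mu> (\<rho> x) x + V \<mu> (\<rho> y) y))"
    using K_mixed_V by blast
  show ?thesis
    using CK_pos K_nonneg K_vanishes_far K_le_V K_sym K_diff_y_V mixed K_meas K_total
    by (intro exI[of _ K] exI[of _ CK]) blast
qed

end
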